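(* Consider the closed-loop system described in the context, where the plant satisfies Assumption A2, with fixed $\tau_p\ge0$. There exists $\kappa>0$ such that for every gain $k\in(0,\kappa)$ there exists $\bar T>0$ with the following property: let $r:[0,\infty)\to Y$ be a step function with finitely many discontinuity (jump) points such that the time difference between any two jump points is at least $\bar T$, and let $r_f\in Y$ denote its final value (its value after the last jump). If the initial state $(x(0),u_I(0))\in X=\mathbb{R}^n\times U$ satisfies $\|x(0)-\Xi(u_I(0))\|\le\varepsilon_0$, then $x(t)\to\Xi(u_{r_f})$, $u(t)\to u_{r_f}$ and $y(t)\to r_f$ as $t\to\infty$, at an exponential rate.
   Context: Plant: $\dot x=f(x,u)$, $y=g(x)$, $f\in C^2(\mathbb{R}^n\times\mathbb{R};\mathbb{R}^n)$, $g:\mathbb{R}^n\to\mathbb{R}$ locally Lipschitz. Fix $u_{min}<u_{max}$, $U=[u_{min},u_{max}]$, $U_\delta=[u_{min}-\delta,u_{max}+\delta]$. For $w\in\mathbb{R}$, $w^+=\max\{w,0\}$, $w^-=\min\{w,0\}$. Saturating integrator: $\dot u_I=\mathscr{S}(u_I,w)$, $\mathscr{S}(u_I,w)=w^+$ if $u_I\le u_{min}$, $w$ if $u_I\in(u_{min},u_{max})$, $w^-$ if $u_I\ge u_{max}$ (trajectories for $L^1$ inputs defined by continuous extension from polynomial inputs). For gains $k>0$, $\tau_p\ge0$ and reference $r(t)$, the closed-loop system is $\dot x=f(x,u_I+\tau_pk(r-g(x)))$, $\dot u_I=\mathscr{S}(u_I,k(r-g(x)))$, with plant input $u=u_I+\tau_pk(r-g(x))$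 and output $y=g(x)$. Assumption A1: there exist $\delta>0$, $\Xi\in C^1(U_\delta;\mathbb{R}^n)$ with $f(\Xi(u),u)=0$ on $U_\delta$, and $\varepsilon_0>0,\lambda>0,m\ge1$ such that for each constant $u_0\in U_\delta$, solutions of $\dot x=f(x,u_0)$ with $\|x(0)-\Xi(u_0)\|\le\varepsilon_0$ satisfy $\|x(t)-\Xi(u_0)\|\le me^{-\lambda t}\|x(0)-\Xi(u_0)\|$, $t\ge0$. Assumption A2: A1 holds and $G(u):=g(\Xi(u))$ satisfies $G(b)-G(a)\ge\mu(b-a)$ for all $a<b$ in $U_\delta$, some $\mu>0$. $Y=[G(u_{min}),G(u_{max})]$; for $r\in Y$, $u_r=G^{-1}(r)$. *)

theory Defs
  imports "HOL-Analysis.Analysis"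
begin

definition sat_int :: "real \<Rightarrow> real \<Rightarrow> real \<Rightarrow> real \<Rightarrow> real" where
  "sat_int umin umax uI w =
     (if uI \<le> umin then max w 0 else if uI < umax then w else min w 0)"

definition C2 :: "('a::real_normed_vector \<Rightarrow> 'b::real_normed_vector) \<Rightarrow> bool" where
  "C2 F \<longleftrightarrow> (\<exists>DF D2F.
      (\<forall>z. (F has_derivative blinfun_apply (DF z)) (at z)) \<and>
      (\<forall>z. (DF has_derivative blinfun_apply (D2F z)) (at z)) \<and>
      continuous_on UNIV D2F)"

definition locally_lipschitz :: "('a::metric_space \<Rightarrow> real) \<Rightarrow> bool" where
  "locally_lipschitz F \<longleftrightarrow>
     (\<forall>z. \<exists>e>0. \<exists>L. \<forall>a\<in>ball z e. \<forall>b\<in>ball z e. dist (F a) (F b) \<le> L * dist a b)"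

definition C1_on :: "real set \<Rightarrow> (real \<Rightarrow> 'b::real_normed_vector) \<Rightarrow> bool" where
  "C1_on S F \<longleftrightarrow> (\<exists>DF. (\<forall>u\<in>S. (F has_vector_derivative DF u) (at u within S))
                       \<and> continuous_on S DF)"

definition assumption_A1 ::
  "('n::real_normed_vector \<Rightarrow> real \<Rightarrow> 'n) \<Rightarrow> real \<Rightarrow> real \<Rightarrow> real \<Rightarrow> (real \<Rightarrow> 'n)
     \<Rightarrow> real \<Rightarrow> real \<Rightarrow> real \<Rightarrow> bool" where
  "assumption_A1 f umin umax \<delta> \<Xi> \<epsilon>0 lam m \<longleftrightarrow>
     \<delta> > 0 \<and> C1_on {umin - \<delta> .. umax + \<delta>} \<Xi> \<and>
     (\<forall>u\<in>{umin - \<delta> .. umax + \<delta>}. f (\<Xi> u) u = 0) \<and>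
     \<epsilon>0 > 0 \<and> lam > 0 \<and> m \<ge> 1 \<and>
     (\<forall>u0\<in>{umin - \<delta> .. umax + \<delta>}. \<forall>T (x::real \<Rightarrow> 'n).
        (\<forall>t\<in>{0..T}. (x has_vector_derivative f (x t) u0) (at t within {0..T})) \<and>
        norm (x 0 - \<Xi> u0) \<le> \<epsilon>0 \<longrightarrow>
        (\<forall>t\<in>{0..T}. norm (x t - \<Xi> u0) \<le> m * exp (- lam * t) * norm (x 0 - \<Xi> u0)))"

definition closed_loop_solution ::
  "('n::real_normed_vector \<Rightarrow> real \<Rightarrow> 'n) \<Rightarrow> ('n \<Rightarrow> real) \<Rightarrow> real \<Rightarrow> real \<Rightarrow> real \<Rightarrow> real
     \<Rightarrow> (real \<Rightarrow> real) \<Rightarrow> (real \<Rightarrow> 'n) \<Rightarrow> (real \<Rightarrow> real) \<Rightarrow> bool" where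
  "closed_loop_solution f g umin umax \<tau>p k r x uI \<longleftrightarrow>
     (\<forall>t\<ge>0.
        ((\<lambda>s. f (x s) (uI s + \<tau>p * k * (r s - g (x s)))) has_integral (x t - x 0)) {0..t} \<and>
        ((\<lambda>s. sat_int umin umax (uI s) (k * (r s - g (x s)))) has_integral (uI t - uI 0)) {0..t})"

end

(*
  Choose the window length h with m e^(-lam h) = 1/4. On each window [n h, n h + h] the plant is
  compared with the system frozen at the input u_I(n h), to which A1 applies. Since u_I moves by
  O(k) over a window, Gronwall's inequality shows that the error e = x - Xi(u_I) shrinks by the
  factor 1/4 up to a term of order k. For small k this keeps |e(n h)| <= eps0 for every reference
  with values in Y, whatever its switching times. Once the reference has settled at r_f, the
  monotonicity of G = g o Xi makes the integrator error |u_I - u_r| contract by 1 - k mu h per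
  window up to terms of order k |e|, and the weighted sum |e(n h)| + beta |u_I(n h) - u_r|
  decays geometrically, hence exponentially in t.
*)
theory Submission
  imports Defs
begin

section \<open>Crossing times and Gronwall's inequality\<close>

lemma first_crossing:
  fixes \<phi> :: "real \<Rightarrow> real"
  assumes cont: "continuous_on {a..b} \<phi>" and "\<phi> a < c" "c \<le> \<phi> b" "a \<le> b"
  shows "\<exists>s\<in>{a<..b}. \<phi> s = c \<and> (\<forall>\<sigma>\<in>{a..<s}. \<phi> \<sigma> < c)"
proof -
  let ?T = "{a..b} \<inter> \<phi> -` {c..}"
  have "closed ?T" using cont by (intro continuous_closed_preimage) auto
  then have "compact ?T" by (auto simp: compact_eq_bounded_closed intro: bounded_subset[of "{a..b}"])
  moreover have "?T \<noteq> {}" using assms by auto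
  ultimately obtain s where s: "s \<in> ?T" and least: "\<And>t. t \<in> ?T \<Longrightarrow> s \<le> t"
    using compact_attains_inf by metis
  have below: "\<forall>\<sigma>\<in>{a..<s}. \<phi> \<sigma> < c" using s least by force
  have "a < s" using s assms(2) by (cases "s = a") auto
  moreover have "\<phi> s = c"
  proof (rule ccontr)
    assume "\<phi> s \<noteq> c"
    moreover have "continuous_on {a..s} \<phi>" using cont s by (auto intro: continuous_on_subset)
    ultimately obtain \<sigma> where "a \<le> \<sigma>" "\<sigma> \<le> s" "\<phi> \<sigma> = c"
      using IVT'[of \<phi> a c s] s assms(2) \<open>a < s\<close> by auto
    then show False using below \<open>\<phi> s \<noteq> c\<close> by (cases "\<sigma> = s") auto
  qed
  ultimately show ?thesis using s below by auto
qed

lemma last_crossing: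
  fixes \<phi> :: "real \<Rightarrow> real"
  assumes cont: "continuous_on {a..b} \<phi>" and "\<phi> a \<le> c" "c < \<phi> b" "a \<le> b"
  shows "\<exists>s\<in>{a..<b}. \<phi> s = c \<and> (\<forall>\<sigma>\<in>{s<..b}. c < \<phi> \<sigma>)"
proof -
  let ?T = "{a..b} \<inter> \<phi> -` {..c}"
  have "closed ?T" using cont by (intro continuous_closed_preimage) auto
  then have "compact ?T" by (auto simp: compact_eq_bounded_closed intro: bounded_subset[of "{a..b}"])
  moreover have "?T \<noteq> {}" using assms by auto
  ultimately obtain s where s: "s \<in> ?T" and greatest: "\<And>t. t \<in> ?T \<Longrightarrow> t \<le> s"
    using compact_attains_sup by metis
  have above: "\<forall>\<sigma>\<in>{s<..b}. c < \<phi> \<sigma>"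
  proof
    fix \<sigma> assume \<sigma>: "\<sigma> \<in> {s<..b}"
    then have "\<sigma> \<notin> ?T" using greatest[of \<sigma>] by fastforce
    then show "c < \<phi> \<sigma>" using \<sigma> s by auto
  qed
  have "s < b" using s assms(3) by (cases "s = b") auto
  moreover have "\<phi> s = c"
  proof (rule ccontr)
    assume "\<phi> s \<noteq> c"
    moreover have "continuous_on {s..b} \<phi>" using cont s by (auto intro: continuous_on_subset)
    ultimately obtain \<sigma> where "s \<le> \<sigma>" "\<sigma> \<le> b" "\<phi> \<sigma> = c"
      using IVT'[of \<phi> s c b] s assms(3) \<open>s < b\<close> by auto
    then show False using above \<open>\<phi> s \<noteq> c\<close> by (cases "\<sigma> = s") auto
  qed
  ultimately show ?thesis using s above by auto
qed

lemma continuous_avoiding_value: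
  fixes \<phi> :: "real \<Rightarrow> real"
  assumes cont: "continuous_on {a..b} \<phi>" and avoid: "\<And>s. s \<in> {a..b} \<Longrightarrow> \<phi> s \<noteq> c"
  shows "(\<forall>s\<in>{a..b}. c < \<phi> s) \<or> (\<forall>s\<in>{a..b}. \<phi> s < c)"
proof (rule ccontr)
  assume "\<not> ?thesis"
  then obtain s1 s2 where s12: "s1 \<in> {a..b}" "s2 \<in> {a..b}" "\<phi> s1 \<le> c" "c \<le> \<phi> s2"
    by (auto simp: not_less)
  have "\<exists>s\<in>{a..b}. \<phi> s = c"
  proof (cases "s1 \<le> s2")
    case True
    then show ?thesis using IVT'[of \<phi> s1 c s2] s12 continuous_on_subset[OF cont, of "{s1..s2}"] by force
  next
    case False
    then show ?thesis using IVT2'[of \<phi> s1 c s2] s12 continuous_on_subset[OF cont, of "{s2..s1}"] by force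
  qed
  then show False using avoid by blast
qed

lemma continuous_stays_below:
  fixes \<phi> :: "real \<Rightarrow> real"
  assumes cont: "continuous_on {a..b} \<phi>" and start: "\<phi> a < R"
    and step: "\<And>s. s \<in> {a..b} \<Longrightarrow> \<forall>\<sigma>\<in>{a..s}. \<phi> \<sigma> \<le> R \<Longrightarrow> \<phi> s < R"
    and s: "s \<in> {a..b}"
  shows "\<phi> s < R"
proof (rule ccontr)
  assume "\<not> \<phi> s < R"
  moreover have "continuous_on {a..s} \<phi>" using cont s by (auto intro: continuous_on_subset)
  ultimately obtain s1 where s1: "s1 \<in> {a<..s}" "\<phi> s1 = R" "\<forall>\<sigma>\<in>{a..<s1}. \<phi> \<sigma> < R"
    using first_crossing[of a s \<phi> R] start s by auto
  then have "\<forall>\<sigma>\<in>{a..s1}. \<phi> \<sigma> \<le> R" by (metis atLeastAtMost_iff atLeastLessThan_iff order_le_less)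
  then have "\<phi> s1 < R" using step[of s1] s1(1) s by auto
  with s1(2) show False by simp
qed

lemma has_integral_increment:
  fixes X \<phi> :: "real \<Rightarrow> 'a::banach"
  assumes X: "\<And>t. 0 \<le> t \<Longrightarrow> (\<phi> has_integral (X t - X 0)) {0..t}" and "0 \<le> a" "a \<le> b"
  shows "(\<phi> has_integral (X b - X a)) {a..b}"
proof -
  have ia: "(\<phi> has_integral (X a - X 0)) {0..a}" and ib: "(\<phi> has_integral (X b - X 0)) {0..b}"
    using X assms(2,3) by auto
  then have int: "\<phi> integrable_on {0..b}" by blast
  then have int_ab: "\<phi> integrable_on {a..b}" by (rule integrable_subinterval_real) (use assms in auto)
  have "integral {0..a} \<phi> + integral {a..b} \<phi> = integral {0..b} \<phi>"
    using Henstock_Kurzweil_Integration.integral_combine[OF assms(2,3) int] .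
  then have "integral {a..b} \<phi> = X b - X a" using integral_unique[OF ia] integral_unique[OF ib]
    by (simp add: algebra_simps)
  with int_ab show ?thesis by (metis has_integral_integral)
qed

lemma continuous_on_integral_form:
  fixes X \<phi> :: "real \<Rightarrow> 'a::banach"
  assumes X: "\<And>t. 0 \<le> t \<Longrightarrow> (\<phi> has_integral (X t - X 0)) {0..t}" and a: "0 \<le> a"
  shows "continuous_on {a..b} X"
proof (cases "a \<le> b")
  case True
  then have "\<phi> integrable_on {0..b}" using X a by (meson has_integral_integrable order_trans)
  then have "continuous_on {0..b} (\<lambda>t. X 0 + integral {0..t} \<phi>)"
    by (intro continuous_intros indefinite_integral_continuous_1)
  moreover have "X 0 + integral {0..t} \<phi> = X t" if "t \<in> {0..b}" for t
    using X[of t] that by (simp add: integral_unique)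
  ultimately have "continuous_on {0..b} X" by (rule continuous_on_eq)
  then show ?thesis by (rule continuous_on_subset) (use a in auto)
qed simp

lemma integral_form_stays_below:
  fixes X \<phi> :: "real \<Rightarrow> real"
  assumes X: "\<And>t. 0 \<le> t \<Longrightarrow> (\<phi> has_integral (X t - X 0)) {0..t}"
    and start: "X 0 \<le> c" and push: "\<And>s. 0 \<le> s \<Longrightarrow> c \<le> X s \<Longrightarrow> \<phi> s \<le> 0"
    and t: "0 \<le> t"
  shows "X t \<le> c"
proof (rule ccontr)
  assume "\<not> X t \<le> c"
  moreover have "continuous_on {0..t} X" using continuous_on_integral_form[OF X, of 0 t] by simp
  ultimately obtain s where s: "s \<in> {0..<t}" "X s = c" "\<forall>\<sigma>\<in>{s<..t}. c < X \<sigma>"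
    using last_crossing[of 0 t X c] start t by auto
  have "(\<phi> has_integral (X t - X s)) {s..t}" using s by (intro has_integral_increment[OF X]) auto
  moreover have "\<phi> \<sigma> \<le> 0" if \<sigma>: "\<sigma> \<in> {s..t}" for \<sigma>
  proof -
    have "c \<le> X \<sigma>"
    proof (cases "\<sigma> = s")
      case False
      then have "\<sigma> \<in> {s<..t}" using \<sigma> by auto
      then show ?thesis using s(3) by (auto intro: less_imp_le)
    qed (use s in simp)
    then show ?thesis using push \<sigma> s by auto
  qed
  ultimately have "X t - X s \<le> 0" by (rule has_integral_le[OF _ has_integral_0])
  then show False using s \<open>\<not> X t \<le> c\<close> by simp
qed

lemma gronwall:
  fixes \<phi> :: "real \<Rightarrow> real"
  assumes cont: "continuous_on {a..b} \<phi>" and L: "0 \<le> L"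
    and le: "\<And>t. t \<in> {a..b} \<Longrightarrow> \<phi> t \<le> c + L * integral {a..t} \<phi>"
    and t: "t \<in> {a..b}"
  shows "\<phi> t \<le> c * exp (L * (t - a))"
proof -
  define \<Psi> where "\<Psi> t = c + L * integral {a..t} \<phi>" for t
  define \<Phi> where "\<Phi> t = exp (- L * (t - a)) * \<Psi> t" for t
  have d\<Psi>: "(\<Psi> has_real_derivative L * \<phi> s) (at s within {a..b})" if "s \<in> {a..b}" for s
    unfolding \<Psi>_def using integral_has_real_derivative[OF cont that]
    by (auto intro!: derivative_eq_intros)
  have d\<Phi>: "(\<Phi> has_real_derivative exp (- L * (s - a)) * (L * \<phi> s - L * \<Psi> s)) (at s within {a..b})"
    if "s \<in> {a..b}" for s
    unfolding \<Phi>_def using d\<Psi>[OF that] by (auto intro!: derivative_eq_intros simp: algebra_simps)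
  have at: "a \<le> t" "{a..t} \<subseteq> {a..b}" using t by auto
  have "((\<lambda>s. exp (- L * (s - a)) * (L * \<phi> s - L * \<Psi> s)) has_integral (\<Phi> t - \<Phi> a)) {a..t}"
  proof (rule fundamental_theorem_of_calculus[OF at(1)])
    fix s assume "s \<in> {a..t}"
    then have "s \<in> {a..b}" using at by auto
    from has_field_derivative_subset[OF d\<Phi>[OF this] at(2)]
    show "(\<Phi> has_vector_derivative exp (- L * (s - a)) * (L * \<phi> s - L * \<Psi> s)) (at s within {a..t})"
      by (simp add: has_real_derivative_iff_has_vector_derivative)
  qed
  moreover have "exp (- L * (s - a)) * (L * \<phi> s - L * \<Psi> s) \<le> 0" if "s \<in> {a..t}" for s
    using le[of s] that t L by (simp add: \<Psi>_def mult_nonneg_nonpos mult_left_mono)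
  ultimately have "\<Phi> t - \<Phi> a \<le> 0"
    using has_integral_le[OF _ has_integral_0, of _ "\<Phi> t - \<Phi> a" "{a..t}"] by blast
  then have "exp (- L * (t - a)) * \<Psi> t \<le> c" by (simp add: \<Phi>_def \<Psi>_def)
  then have "\<Psi> t \<le> c * exp (L * (t - a))"
  proof -
    assume le_c: "exp (- L * (t - a)) * \<Psi> t \<le> c"
    have "\<Psi> t = exp (L * (t - a)) * (exp (- L * (t - a)) * \<Psi> t)"
      by (simp add: mult.assoc[symmetric] exp_add[symmetric])
    also have "\<dots> \<le> exp (L * (t - a)) * c" using le_c by (intro mult_left_mono) auto
    finally show ?thesis by (simp add: mult.commute)
  qed
  then show ?thesis using le[OF t] by (simp add: \<Psi>_def)
qed

lemma gronwall_deviation: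
  fixes d \<phi> :: "real \<Rightarrow> 'a::banach"
  assumes d: "\<And>s. s \<in> {a..t} \<Longrightarrow> (\<phi> has_integral d s) {a..s}"
    and \<phi>: "\<And>s. s \<in> {a..t} \<Longrightarrow> norm (\<phi> s) \<le> L * norm (d s) + c"
    and L: "0 \<le> L" and c: "0 \<le> c" and at: "a \<le> t"
  shows "norm (d t) \<le> c * (t - a) * exp (L * (t - a))"
proof -
  have int: "\<phi> integrable_on {a..s}" if "s \<in> {a..t}" for s using d[OF that] by blast
  have d_eq: "d s = integral {a..s} \<phi>" if "s \<in> {a..t}" for s using d[OF that] by (simp add: integral_unique)
  have "continuous_on {a..t} (\<lambda>s. norm (integral {a..s} \<phi>))"
    using int at by (intro continuous_intros indefinite_integral_continuous_1) auto
  then have cont: "continuous_on {a..t} (\<lambda>s. norm (d s))" by (rule continuous_on_eq) (simp add: d_eq)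
  have "norm (d s) \<le> c * (t - a) + L * integral {a..s} (\<lambda>\<sigma>. norm (d \<sigma>))" if s: "s \<in> {a..t}" for s
  proof -
    have sub: "{a..s} \<subseteq> {a..t}" using s by auto
    have intd: "(\<lambda>\<sigma>. norm (d \<sigma>)) integrable_on {a..s}"
      by (rule integrable_continuous_real, rule continuous_on_subset[OF cont sub])
    have intL: "(\<lambda>\<sigma>. L * norm (d \<sigma>)) integrable_on {a..s}" using integrable_cmul[OF intd, of L] by simp
    have "norm (d s) \<le> integral {a..s} (\<lambda>\<sigma>. L * norm (d \<sigma>) + c)"
      unfolding d_eq[OF s] using \<phi> sub
      by (intro integral_norm_bound_integral int[OF s] integrable_add intL) auto
    also have "\<dots> = integral {a..s} (\<lambda>\<sigma>. L * norm (d \<sigma>)) + integral {a..s} (\<lambda>\<sigma>. c)"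
      by (rule integral_add[OF intL integrable_const_ivl])
    also have "\<dots> = L * integral {a..s} (\<lambda>\<sigma>. norm (d \<sigma>)) + c * (s - a)"
      using s intd by simp
    also have "\<dots> \<le> L * integral {a..s} (\<lambda>\<sigma>. norm (d \<sigma>)) + c * (t - a)"
      using s c by (simp add: mult_left_mono)
    finally show ?thesis by simp
  qed
  then show ?thesis using gronwall[OF cont L, of "c * (t - a)" t] at by auto
qed

lemma exists_window:
  fixes t h :: real
  assumes "0 \<le> t" "0 < h"
  obtains n :: nat where "real n * h \<le> t" "t \<le> real n * h + h"
proof -
  define n where "n = nat \<lfloor>t / h\<rfloor>"
  have "real n = of_int \<lfloor>t / h\<rfloor>" using assms by (simp add: n_def)
  then have "real n \<le> t / h" "t / h < real n + 1" by linarith+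
  then have "real n * h \<le> t" "t < (real n + 1) * h"
    using assms by (simp_all add: pos_le_divide_eq pos_divide_less_eq)
  then show thesis using that[of n] by (simp add: algebra_simps)
qed

lemma power_le_exp_on_window:
  fixes h \<rho> t :: real
  assumes h: "0 < h" and \<rho>: "0 < \<rho>" "\<rho> \<le> 1" and n: "n0 \<le> n" "t \<le> real n * h + h"
  defines "\<alpha> \<equiv> - ln \<rho> / h"
  shows "\<rho> ^ (n - n0) \<le> exp (\<alpha> * (real n0 * h + h)) * exp (- \<alpha> * t)"
proof -
  have "0 \<le> \<alpha>" using \<rho> h by (simp add: \<alpha>_def divide_nonpos_pos)
  then have "\<alpha> * (t - h) \<le> \<alpha> * (real n * h)" using n by (intro mult_left_mono) auto
  then have "- \<alpha> * (h * real (n - n0)) \<le> \<alpha> * (real n0 * h + h) + - \<alpha> * t"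
    using n by (simp add: of_nat_diff algebra_simps)
  moreover have "\<rho> = exp (- \<alpha> * h)" using \<rho> h by (simp add: \<alpha>_def)
  then have "\<rho> ^ (n - n0) = exp (- \<alpha> * (h * real (n - n0)))"
    by (simp add: exp_of_nat_mult[symmetric] mult_ac)
  ultimately show ?thesis by (simp add: exp_add[symmetric])
qed

lemma exponential_A1_shifted_windows:
  fixes \<phi> :: "real \<Rightarrow> real"
  assumes h: "0 < h" and \<rho>: "0 < \<rho>" "\<rho> < 1"
    and bounded: "\<And>t. 0 \<le> t \<Longrightarrow> \<phi> t \<le> B"
    and windows: "\<And>n t. n0 \<le> n \<Longrightarrow> real n * h \<le> t \<Longrightarrow> t \<le> real n * h + h \<Longrightarrow> \<phi> t \<le> Z * \<rho> ^ (n - n0)"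
  shows "\<exists>C \<alpha>. 0 < \<alpha> \<and> (\<forall>t\<ge>0. \<phi> t \<le> C * exp (- \<alpha> * t))"
proof -
  define \<alpha> where "\<alpha> = - ln \<rho> / h"
  have "ln \<rho> < 0" using \<rho> by simp
  then have \<alpha>: "0 < \<alpha>" using h by (simp add: \<alpha>_def divide_neg_pos)
  define C where "C = max B 0 * exp (\<alpha> * (real n0 * h)) + max Z 0 * exp (\<alpha> * (real n0 * h + h))"
  have "\<phi> t \<le> C * exp (- \<alpha> * t)" if t: "0 \<le> t" for t
  proof -
    obtain n :: nat where n: "real n * h \<le> t" "t \<le> real n * h + h" using exists_window t h by blast
    show ?thesis
    proof (cases "n0 \<le> n")
      case True
      have "\<phi> t \<le> max Z 0 * \<rho> ^ (n - n0)"
        using windows[OF True n] \<rho> by (meson max.cobounded1 mult_right_mono order_trans zero_le_power less_imp_le)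
      also have "\<dots> \<le> max Z 0 * (exp (\<alpha> * (real n0 * h + h)) * exp (- \<alpha> * t))"
        using power_le_exp_on_window[OF h \<rho>(1) less_imp_le[OF \<rho>(2)] True n(2)]
        by (intro mult_left_mono) (auto simp: \<alpha>_def)
      also have "\<dots> \<le> C * exp (- \<alpha> * t)"
        using zero_le_mult_iff[of "max B 0 * exp (\<alpha> * (real n0 * h))" "exp (- \<alpha> * t)"]
        by (simp add: C_def distrib_right mult.assoc)
      finally show ?thesis .
    next
      case False
      then have "real n + 1 \<le> real n0" by simp
      then have "(real n + 1) * h \<le> real n0 * h" using h by (intro mult_right_mono) auto
      then have "t \<le> real n0 * h" using n by (simp add: algebra_simps)
      then have "1 \<le> exp (\<alpha> * (real n0 * h)) * exp (- \<alpha> * t)"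
        using \<alpha> by (simp add: exp_add[symmetric] algebra_simps)
      then have "max B 0 \<le> max B 0 * exp (\<alpha> * (real n0 * h)) * exp (- \<alpha> * t)"
        by (metis max.cobounded2 mult.assoc mult_le_cancel_left1 not_less)
      also have "\<dots> \<le> C * exp (- \<alpha> * t)"
        using zero_le_mult_iff[of "max Z 0 * exp (\<alpha> * (real n0 * h + h))" "exp (- \<alpha> * t)"]
        by (simp add: C_def distrib_right)
      finally show ?thesis using bounded[OF t] by linarith
    qed
  qed
  then show ?thesis using \<alpha> by blast
qed

section \<open>Picard iteration\<close>

primrec picard :: "('a::banach \<Rightarrow> 'a) \<Rightarrow> real \<Rightarrow> 'a \<Rightarrow> nat \<Rightarrow> real \<Rightarrow> 'a" where
  "picard F a z0 0 = (\<lambda>t. z0)"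
| "picard F a z0 (Suc n) = (\<lambda>t. z0 + integral {a..t} (\<lambda>s. F (picard F a z0 n s)))"

lemma continuous_on_picard:
  assumes "continuous_on UNIV F"
  shows "continuous_on {a..b} (picard F a z0 n)"
proof (induction n)
  case (Suc n)
  have "continuous_on {a..b} (\<lambda>s. F (picard F a z0 n s))"
    using continuous_on_compose2[OF assms Suc] by auto
  then show ?case
    by (auto intro!: continuous_intros indefinite_integral_continuous_1 integrable_continuous_real)
qed simp

lemma has_integral_power_shift:
  assumes "a \<le> t"
  shows "((\<lambda>s. (s - a) ^ n) has_integral (t - a) ^ Suc n / Suc n) {a..t}"
proof -
  have "((\<lambda>s. (s - a) ^ Suc n / Suc n) has_vector_derivative (s - a) ^ n) (at s within {a..t})" for s
    unfolding has_real_derivative_iff_has_vector_derivative[symmetric]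
    by (rule derivative_eq_intros refl | simp)+
  from fundamental_theorem_of_calculus[OF assms this] show ?thesis by simp
qed

lemma picard_step_bound:
  assumes F: "L-lipschitz_on UNIV F" and t: "t \<in> {a..b}"
  shows "norm (picard F a z0 (Suc n) t - picard F a z0 n t)
           \<le> norm (F z0) * L ^ n * (t - a) ^ Suc n / fact (Suc n)"
  using t
proof (induction n arbitrary: t)
  case 0
  then show ?case by simp
next
  case (Suc n)
  let ?p = "picard F a z0"
  have sub: "{a..t} \<subseteq> {a..b}" and at: "a \<le> t" using Suc.prems by auto
  have Fc: "continuous_on UNIV F" using F by (rule lipschitz_on_continuous_on)
  have int: "(\<lambda>s. F (?p j s)) integrable_on {a..t}" for j
    by (intro integrable_continuous_real continuous_on_compose2[OF Fc continuous_on_picard[OF Fc]]) auto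
  define C where "C = L * (norm (F z0) * L ^ n / fact (Suc n))"
  have diff: "?p (Suc j) t - ?p (Suc i) t
      = integral {a..t} (\<lambda>s. F (?p j s)) - integral {a..t} (\<lambda>s. F (?p i s))" for i j
    by simp
  have "norm (?p (Suc (Suc n)) t - ?p (Suc n) t)
      = norm (integral {a..t} (\<lambda>s. F (?p (Suc n) s) - F (?p n s)))"
    by (simp only: diff[where i=n and j="Suc n"] integral_diff[OF int int])
  also have "\<dots> \<le> integral {a..t} (\<lambda>s. C * (s - a) ^ Suc n)"
  proof (rule integral_norm_bound_integral)
    show "(\<lambda>s. F (?p (Suc n) s) - F (?p n s)) integrable_on {a..t}" by (intro integrable_diff int)
    show "(\<lambda>s. C * (s - a) ^ Suc n) integrable_on {a..t}"
      by (intro integrable_continuous_real continuous_intros)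
    fix s assume s: "s \<in> {a..t}"
    have "norm (F (?p (Suc n) s) - F (?p n s)) \<le> L * norm (?p (Suc n) s - ?p n s)"
      by (rule lipschitz_on_normD[OF F]) auto
    also have "\<dots> \<le> C * (s - a) ^ Suc n"
      using mult_left_mono[OF Suc.IH[of s] lipschitz_on_nonneg[OF F]] s sub by (simp add: C_def)
    finally show "norm (F (?p (Suc n) s) - F (?p n s)) \<le> C * (s - a) ^ Suc n" .
  qed
  also have "\<dots> = C * ((t - a) ^ Suc (Suc n) / Suc (Suc n))"
    using has_integral_power_shift[OF at, of "Suc n"] by (simp add: integral_unique)
  also have "\<dots> = norm (F z0) * L ^ Suc n * (t - a) ^ Suc (Suc n) / fact (Suc (Suc n))"
    by (simp add: C_def field_simps)
  finally show ?case .
qed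

text \<open>No bound on \<open>F\<close> is needed: the successive differences of the iterates are controlled by
  \<open>norm (F z0)\<close> alone.\<close>
lemma picard_converges_uniformly:
  fixes F :: "'a::banach \<Rightarrow> 'a" and a b :: real
  assumes F: "L-lipschitz_on UNIV F" and ab: "a \<le> b"
  obtains z where "uniform_limit {a..b} (picard F a z0) z sequentially"
proof -
  let ?p = "picard F a z0"
  have L: "0 \<le> L" using F by (rule lipschitz_on_nonneg)
  define c where "c n = norm (F z0) * (b - a) * (L * (b - a)) ^ n / fact (Suc n)" for n
  have step: "norm (?p (Suc n) t - ?p n t) \<le> c n" if t: "t \<in> {a..b}" for n t
  proof -
    have "(t - a) ^ Suc n \<le> (b - a) ^ Suc n" using t by (intro power_mono) auto
    then have "norm (F z0) * L ^ n * (t - a) ^ Suc n \<le> norm (F z0) * L ^ n * (b - a) ^ Suc n"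
      using L by (intro mult_left_mono) auto
    then show ?thesis
      using order_trans[OF picard_step_bound[OF F t, of z0 n] divide_right_mono]
      by (simp add: c_def power_mult_distrib mult_ac)
  qed
  have "summable c"
  proof (rule summable_comparison_test')
    show "summable (\<lambda>n. norm (F z0) * (b - a) * (inverse (fact n) * (L * (b - a)) ^ n))"
      by (intro summable_mult summable_exp)
    fix n
    have "c n \<le> norm (F z0) * (b - a) * (L * (b - a)) ^ n / fact n"
      unfolding c_def using ab L by (intro divide_left_mono fact_mono) auto
    moreover have "0 \<le> c n" unfolding c_def using ab L by simp
    ultimately show "norm (c n) \<le> norm (F z0) * (b - a) * (inverse (fact n) * (L * (b - a)) ^ n)"
      by (simp add: divide_inverse mult_ac)
  qed
  define z where "z t = z0 + (\<Sum>i. ?p (Suc i) t - ?p i t)" for t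
  have "uniform_limit {a..b} (\<lambda>n t. z0 + (\<Sum>i<n. ?p (Suc i) t - ?p i t)) z sequentially"
    unfolding z_def using Weierstrass_m_test[of "{a..b}" "\<lambda>i t. ?p (Suc i) t - ?p i t" c] step \<open>summable c\<close>
    by (intro uniform_limit_intros) auto
  moreover have "z0 + (\<Sum>i<n. ?p (Suc i) t - ?p i t) = ?p n t" for n t
    by (simp only: sum_lessThan_telescope[of "\<lambda>i. ?p i t" n] picard.simps(1)) simp
  ultimately show ?thesis using that by simp
qed

lemma lipschitz_integral_equation_solution:
  fixes F :: "'a::banach \<Rightarrow> 'a" and a b :: real
  assumes F: "L-lipschitz_on UNIV F" and ab: "a \<le> b"
  obtains z where "continuous_on {a..b} z"
    and "\<And>t. t \<in> {a..b} \<Longrightarrow> z t = z0 + integral {a..t} (\<lambda>s. F (z s))"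
proof -
  let ?p = "picard F a z0"
  have Fc: "continuous_on UNIV F" using F by (rule lipschitz_on_continuous_on)
  obtain z where lim: "uniform_limit {a..b} ?p z sequentially"
    using picard_converges_uniformly[OF F ab] .
  have zc: "continuous_on {a..b} z"
    by (rule uniform_limit_theorem[OF _ lim]) (auto intro: always_eventually continuous_on_picard[OF Fc])
  have Flim: "uniform_limit {a..b} (\<lambda>n s. F (?p n s)) (\<lambda>s. F (z s)) sequentially"
    using uniform_limit_compose_uniformly_continuous_on[OF lim lipschitz_on_uniformly_continuous[OF F]]
    by auto
  show ?thesis
  proof (rule that[OF zc])
    fix t assume t: "t \<in> {a..b}"
    have "uniform_limit {a..t} (\<lambda>n s. F (?p n s)) (\<lambda>s. F (z s)) sequentially"
      using t by (intro uniform_limit_on_subset[OF Flim]) auto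
    moreover have "continuous_on {a..t} (\<lambda>s. F (?p n s))" for n
      by (rule continuous_on_compose2[OF Fc continuous_on_picard[OF Fc]]) auto
    ultimately obtain I J where I: "\<And>n. ((\<lambda>s. F (?p n s)) has_integral I n) {a..t}"
      and J: "((\<lambda>s. F (z s)) has_integral J) {a..t}" and IJ: "I \<longlonglongrightarrow> J"
      by (rule uniform_limit_integral) auto
    have "(\<lambda>n. ?p (Suc n) t) = (\<lambda>n. z0 + I n)" using integral_unique[OF I] by simp
    then have "(\<lambda>n. ?p (Suc n) t) \<longlonglongrightarrow> z0 + J" using IJ by (simp add: tendsto_add)
    moreover have "(\<lambda>n. ?p (Suc n) t) \<longlonglongrightarrow> z t"
      using tendsto_uniform_limitI[OF lim t] by (rule LIMSEQ_Suc)
    ultimately show "z t = z0 + integral {a..t} (\<lambda>s. F (z s))"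
      using J by (simp add: integral_unique LIMSEQ_unique)
  qed
qed

lemma lipschitz_ode_solution:
  fixes F :: "'a::banach \<Rightarrow> 'a" and a b :: real
  assumes F: "L-lipschitz_on UNIV F" and ab: "a \<le> b"
  obtains z where "z a = z0" "continuous_on {a..b} z"
    and "\<And>t. t \<in> {a..b} \<Longrightarrow> (z has_vector_derivative F (z t)) (at t within {a..b})"
    and "\<And>t. t \<in> {a..b} \<Longrightarrow> ((\<lambda>s. F (z s)) has_integral (z t - z0)) {a..t}"
proof -
  obtain z where zc: "continuous_on {a..b} z"
    and z: "\<And>t. t \<in> {a..b} \<Longrightarrow> z t = z0 + integral {a..t} (\<lambda>s. F (z s))"
    using lipschitz_integral_equation_solution[OF F ab] by metis
  have Fzc: "continuous_on {a..b} (\<lambda>s. F (z s))"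
    by (rule continuous_on_compose2[OF lipschitz_on_continuous_on[OF F] zc]) auto
  show ?thesis
  proof (rule that[OF _ zc])
    show "z a = z0" using z[of a] ab by simp
    fix t assume t: "t \<in> {a..b}"
    have "((\<lambda>t. z0 + integral {a..t} (\<lambda>s. F (z s))) has_vector_derivative F (z t)) (at t within {a..b})"
      using integral_has_vector_derivative[OF Fzc t] by (auto intro!: derivative_eq_intros)
    then show "(z has_vector_derivative F (z t)) (at t within {a..b})"
      by (rule has_vector_derivative_transform[rotated 2]) (use t z in auto)
    show "((\<lambda>s. F (z s)) has_integral (z t - z0)) {a..t}"
      using z[OF t] integrable_continuous_real[OF continuous_on_subset[OF Fzc, of "{a..t}"]] t
      by (auto dest: integrable_integral)
  qed
qed

section \<open>Lipschitz constants on compact sets\<close>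

lemma locally_lipschitz_imp_local_lipschitz:
  assumes "locally_lipschitz g"
  shows "local_lipschitz {0::real} X (\<lambda>_. g)"
proof (rule local_lipschitzI)
  fix z assume "z \<in> X"
  obtain e L where e: "e > 0" and L: "\<forall>a\<in>ball z e. \<forall>b\<in>ball z e. dist (g a) (g b) \<le> L * dist a b"
    using assms unfolding locally_lipschitz_def by blast
  have "(max L 0)-lipschitz_on (cball z (e/2) \<inter> X) g"
  proof (rule lipschitz_onI)
    fix a b assume "a \<in> cball z (e/2) \<inter> X" "b \<in> cball z (e/2) \<inter> X"
    then have "dist (g a) (g b) \<le> L * dist a b" using L e by auto
    also have "\<dots> \<le> max L 0 * dist a b" by (intro mult_right_mono) auto
    finally show "dist (g a) (g b) \<le> max L 0 * dist a b" .
  qed auto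
  then show "\<exists>u>0. \<exists>L. \<forall>t\<in>cball t u \<inter> {0}. L-lipschitz_on (cball z u \<inter> X) g" for t :: real
    using e by (intro exI[of _ "e/2"]) auto
qed

lemma locally_lipschitz_continuous:
  assumes "locally_lipschitz g"
  shows "continuous_on UNIV g"
proof -
  have "continuous_on UNIV ((\<lambda>_. g) (0::real))"
    by (rule local_lipschitz_continuous_on[OF locally_lipschitz_imp_local_lipschitz[OF assms]]) simp
  then show ?thesis by simp
qed

lemma locally_lipschitz_lipschitz_on_compact:
  fixes g :: "'a::metric_space \<Rightarrow> real"
  assumes "locally_lipschitz g" "compact X"
  obtains Lg where "Lg-lipschitz_on X g"
  using local_lipschitz_compact_implies_lipschitz[OF locally_lipschitz_imp_local_lipschitz[OF assms(1)]
      assms(2) compact_sing]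
  by auto

lemma C2_lipschitz_on_compact_convex:
  fixes F :: "'a::real_normed_vector \<Rightarrow> 'b::real_normed_vector"
  assumes "C2 F" "compact S" "convex S"
  obtains L where "L-lipschitz_on S F"
proof -
  obtain DF D2F where d1: "\<And>z. (F has_derivative blinfun_apply (DF z)) (at z)"
    and d2: "\<And>z. (DF has_derivative blinfun_apply (D2F z)) (at z)"
    using assms(1) unfolding C2_def by blast
  have "continuous_on S DF"
    using d2 by (auto intro!: continuous_at_imp_continuous_on has_derivative_continuous)
  then have "bounded (DF ` S)" by (rule compact_imp_bounded[OF compact_continuous_image[OF _ assms(2)]])
  then obtain B where B: "\<And>z. z \<in> S \<Longrightarrow> norm (DF z) \<le> B" by (auto simp: bounded_iff)
  have "(max B 0)-lipschitz_on S F"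
  proof (rule lipschitz_onI)
    fix p q assume "p \<in> S" "q \<in> S"
    have "norm (F p - F q) \<le> max B 0 * norm (p - q)"
    proof (rule differentiable_bound[OF assms(3) _ _ \<open>p \<in> S\<close> \<open>q \<in> S\<close>])
      show "(F has_derivative blinfun_apply (DF z)) (at z within S)" for z
        using d1 by (rule has_derivative_at_withinI)
      show "onorm (blinfun_apply (DF z)) \<le> max B 0" if "z \<in> S" for z
        using B[OF that] by (simp add: norm_blinfun.rep_eq[symmetric])
    qed
    then show "dist (F p) (F q) \<le> max B 0 * dist p q" by (simp add: dist_norm)
  qed simp
  then show ?thesis by (rule that)
qed

lemma C1_on_lipschitz:
  fixes \<Xi> :: "real \<Rightarrow> 'a::real_normed_vector"
  assumes "C1_on {a..b} \<Xi>"
  obtains LX where "LX-lipschitz_on {a..b} \<Xi>"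
proof -
  obtain DF where d: "\<And>u. u \<in> {a..b} \<Longrightarrow> (\<Xi> has_vector_derivative DF u) (at u within {a..b})"
    and DFc: "continuous_on {a..b} DF"
    using assms unfolding C1_on_def by blast
  have "bounded (DF ` {a..b})" by (rule compact_imp_bounded[OF compact_continuous_image[OF DFc compact_Icc]])
  then obtain B where B: "\<forall>u\<in>{a..b}. norm (DF u) \<le> B" by (auto simp: bounded_iff)
  have "(max B 0)-lipschitz_on {a..b} \<Xi>"
  proof (rule lipschitz_onI)
    fix u v assume "u \<in> {a..b}" "v \<in> {a..b}"
    have "norm (\<Xi> u - \<Xi> v) \<le> max B 0 * norm (u - v)"
    proof (rule differentiable_bound[OF convex_real_interval(5) _ _ \<open>u \<in> {a..b}\<close> \<open>v \<in> {a..b}\<close>])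
      show "(\<Xi> has_derivative (\<lambda>h. h *\<^sub>R DF z)) (at z within {a..b})" if "z \<in> {a..b}" for z
        using d[OF that] by (simp add: has_vector_derivative_def)
      show "onorm (\<lambda>h. h *\<^sub>R DF z) \<le> max B 0" if "z \<in> {a..b}" for z
        using B[rule_format, OF that] onorm_scaleR_left[OF bounded_linear_ident, of "DF z"] onorm_id[where 'a=real]
        by simp
    qed
    then show "dist (\<Xi> u) (\<Xi> v) \<le> max B 0 * dist u v" by (simp add: dist_norm)
  qed simp
  then show ?thesis by (rule that)
qed

lemma lipschitz_on_norm_le:
  assumes "L-lipschitz_on S F" "a \<in> S" "x \<in> S"
  shows "norm (F x) \<le> norm (F a) + L * norm (x - a)"
  using lipschitz_on_normD[OF assms(1) assms(3,2)] norm_triangle_ineq2[of "F x" "F a"] by linarith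

lemma lipschitz_on_Times_le:
  assumes "L-lipschitz_on (A \<times> B) (\<lambda>z. F (fst z) (snd z))" "x \<in> A" "x' \<in> A" "u \<in> B" "u' \<in> B"
  shows "norm (F x u - F x' u') \<le> L * (norm (x - x') + norm (u - u'))"
proof -
  have "norm (F x u - F x' u') \<le> L * norm ((x, u) - (x', u'))"
    using lipschitz_on_normD[OF assms(1), of "(x, u)" "(x', u')"] assms(2-) by simp
  also have "\<dots> \<le> L * (norm (x - x') + norm (u - u'))"
    using norm_Pair_le[of "x - x'" "u - u'"] lipschitz_on_nonneg[OF assms(1)] by (simp add: mult_left_mono)
  finally show ?thesis .
qed

section \<open>Quantitative form of the assumptions\<close>

locale plant_estimates =
  fixes f :: "real^'n \<Rightarrow> real \<Rightarrow> real^'n" and g :: "real^'n \<Rightarrow> real" and \<Xi> :: "real \<Rightarrow> real^'n"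
    and umin umax \<epsilon>0 lam m \<mu> \<tau>p c0 L LX Lg Mg :: real
  assumes umin_less: "umin < umax"
    and eps0: "0 < \<epsilon>0" and lam: "0 < lam" and m1: "1 \<le> m" and mu: "0 < \<mu>" and taup: "0 \<le> \<tau>p"
    and A1: "\<And>u0 T x t. u0 \<in> {umin..umax} \<Longrightarrow>
        (\<forall>t\<in>{0..T}. (x has_vector_derivative f (x t) u0) (at t within {0..T})) \<Longrightarrow>
        norm (x 0 - \<Xi> u0) \<le> \<epsilon>0 \<Longrightarrow> t \<in> {0..T} \<Longrightarrow>
        norm (x t - \<Xi> u0) \<le> m * exp (- lam * t) * norm (x 0 - \<Xi> u0)"
    and Xi_bound: "\<And>u. u \<in> {umin..umax} \<Longrightarrow> norm (\<Xi> u) \<le> c0"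
    and f_lipschitz: "\<And>x x' u u'. x \<in> cball 0 (c0 + m * \<epsilon>0 + 1) \<Longrightarrow> x' \<in> cball 0 (c0 + m * \<epsilon>0 + 1) \<Longrightarrow>
        u \<in> {umin - 1..umax + 1} \<Longrightarrow> u' \<in> {umin - 1..umax + 1} \<Longrightarrow>
        norm (f x u - f x' u') \<le> L * (norm (x - x') + \<bar>u - u'\<bar>)"
    and L_nonneg: "0 \<le> L"
    and Xi_lipschitz: "\<And>u u'. u \<in> {umin..umax} \<Longrightarrow> u' \<in> {umin..umax} \<Longrightarrow>
        norm (\<Xi> u - \<Xi> u') \<le> LX * \<bar>u - u'\<bar>"
    and LX_nonneg: "0 \<le> LX"
    and g_lipschitz: "\<And>x x'. x \<in> cball 0 (c0 + m * \<epsilon>0 + 1) \<Longrightarrow> x' \<in> cball 0 (c0 + m * \<epsilon>0 + 1) \<Longrightarrow>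
        \<bar>g x - g x'\<bar> \<le> Lg * norm (x - x')"
    and Lg_nonneg: "0 \<le> Lg"
    and g_bound: "\<And>x. x \<in> cball 0 (c0 + m * \<epsilon>0 + 1) \<Longrightarrow> \<bar>g x\<bar> \<le> Mg"
    and g_continuous: "continuous_on UNIV g"
    and G_increasing: "\<And>a b. a \<in> {umin..umax} \<Longrightarrow> b \<in> {umin..umax} \<Longrightarrow> a < b \<Longrightarrow>
        \<mu> * (b - a) \<le> g (\<Xi> b) - g (\<Xi> a)"
begin

abbreviation "R \<equiv> m * \<epsilon>0 + 1"
abbreviation "K \<equiv> cball (0::real^'n) (c0 + m * \<epsilon>0 + 1)"

definition "h = ln (4 * m) / lam"

text \<open>Over a window of length \<open>h\<close> on which
  \<open>\<bar>r - g x\<bar> \<le> W\<close>, the error \<open>\<parallel>x - \<Xi> u\<^sub>I\<parallel>\<close> picks up at most \<open>k W D\<close>, of which \<open>k W D1\<close> is the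
  Gronwall deviation from the frozen system; \<open>W0\<close> bounds \<open>\<bar>r - g x\<bar>\<close> on \<open>K\<close>. Once the reference
  has settled, \<open>W \<le> P \<bar>u\<^sub>I - u\<^sub>r\<bar> + Q \<parallel>x - \<Xi> u\<^sub>I\<parallel>\<close>, and \<open>\<parallel>x - \<Xi> u\<^sub>I\<parallel> + \<beta> \<bar>u\<^sub>I - u\<^sub>r\<bar>\<close>
  contracts from window to window.\<close>
definition "W0 = \<bar>g (\<Xi> umin)\<bar> + \<bar>g (\<Xi> umax)\<bar> + Mg"
definition "D1 = L * (h + \<tau>p) * h * exp (L * h)"
definition "D = D1 + LX * h"
definition "P = 2 * Lg * LX"
definition "Q = 2 * Lg * m"
definition "c2 = h * Q + \<mu> * h\<^sup>2 * Q + h * Lg * m + h * Lg * D * Q"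
definition "\<beta> = 4 * D * P / (\<mu> * h) + 1"

definition small_gain :: "real \<Rightarrow> bool" where
  "small_gain k \<longleftrightarrow> k * (W0 * D) \<le> min (1/2) (3/4 * \<epsilon>0) \<and> k * (\<tau>p * W0) \<le> 1
     \<and> k * (Lg * LX * h + Lg * D) \<le> 1/2 \<and> k \<le> 1
     \<and> k * (\<mu> * h\<^sup>2 * P + h * Lg * D * P) \<le> \<mu> * h / 2 \<and> k * (h * (P + \<mu> / 2)) \<le> 1
     \<and> k * (D * Q + \<beta> * c2 + \<mu> * h / 4) \<le> 3/4"

lemma h_pos: "0 < h"
  unfolding h_def using m1 lam by (intro divide_pos_pos) auto

lemma decay_over_window: "m * exp (- lam * h) = 1/4"
  using m1 lam by (simp add: h_def exp_minus field_simps)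

lemma eps0_less_R: "\<epsilon>0 < R"
proof -
  have "1 * \<epsilon>0 \<le> m * \<epsilon>0" using m1 eps0 by (intro mult_right_mono) auto
  then show ?thesis by simp
qed

lemma c0_nonneg: "0 \<le> c0"
proof -
  have "norm (\<Xi> umin) \<le> c0" using Xi_bound umin_less by simp
  then show ?thesis using norm_ge_zero order_trans by blast
qed

lemma constants_nonneg:
  "0 \<le> W0" "0 \<le> D1" "0 \<le> D" "0 \<le> P" "0 \<le> Q" "0 \<le> c2" "1 \<le> \<beta>"
proof -
  have "\<bar>g 0\<bar> \<le> Mg" using c0_nonneg eps0_less_R eps0 by (intro g_bound) simp
  then show "0 \<le> W0" by (simp add: W0_def)
  show D1: "0 \<le> D1" unfolding D1_def using L_nonneg h_pos taup by simp
  then show D: "0 \<le> D" unfolding D_def using LX_nonneg h_pos by simp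
  show P: "0 \<le> P" and Q: "0 \<le> Q" unfolding P_def Q_def using Lg_nonneg LX_nonneg m1 by auto
  show "0 \<le> c2" unfolding c2_def using h_pos Q Lg_nonneg m1 D mu by simp
  have "0 \<le> 4 * D * P / (\<mu> * h)" using D P mu h_pos by simp
  then show "1 \<le> \<beta>" by (simp add: \<beta>_def)
qed

lemma eventually_small_gain: "eventually small_gain (at_right 0)"
proof -
  have small: "eventually (\<lambda>k. k * a \<le> b) (at_right 0)" if "0 < b" for a b :: real
  proof -
    have "((\<lambda>k. k * a) \<longlongrightarrow> 0 * a) (at_right 0)" by (intro tendsto_intros)
    from order_tendstoD(2)[OF this, of b] that have "eventually (\<lambda>k. k * a < b) (at_right 0)" by simp
    then show ?thesis by eventually_elim simp
  qed
  have "eventually (\<lambda>k. k \<le> 1) (at_right (0::real))"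
    using eventually_at_right_real[of 0 1] by (auto elim: eventually_mono)
  then show ?thesis
    unfolding small_gain_def using eps0 mu h_pos by (intro eventually_conj small) auto
qed

lemma near_equilibrium_in_K: "u \<in> {umin..umax} \<Longrightarrow> norm (x - \<Xi> u) \<le> R \<Longrightarrow> x \<in> K"
  using Xi_bound[of u] norm_triangle_ineq[of "x - \<Xi> u" "\<Xi> u"] by (auto simp: dist_norm)

lemma Xi_in_K: "u \<in> {umin..umax} \<Longrightarrow> \<Xi> u \<in> K"
  using near_equilibrium_in_K[of u "\<Xi> u"] eps0_less_R eps0 by simp

lemma A1_shifted:
  assumes u0: "u0 \<in> {umin..umax}"
    and x: "\<And>t. t \<in> {t0..t1} \<Longrightarrow> (x has_vector_derivative f (x t) u0) (at t within {t0..t1})"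
    and x0: "norm (x t0 - \<Xi> u0) \<le> \<epsilon>0" and t: "t \<in> {t0..t1}"
  shows "norm (x t - \<Xi> u0) \<le> m * exp (- lam * (t - t0)) * norm (x t0 - \<Xi> u0)"
proof -
  have "((\<lambda>\<tau>. x (\<tau> + t0)) has_vector_derivative f (x (\<tau> + t0)) u0) (at \<tau> within {0..t1 - t0})"
    if "\<tau> \<in> {0..t1 - t0}" for \<tau>
  proof -
    have "((\<lambda>\<tau>. \<tau> + t0) has_vector_derivative 1) (at \<tau> within {0..t1 - t0})"
      by (auto intro!: derivative_eq_intros)
    moreover have "(\<lambda>\<tau>. \<tau> + t0) ` {0..t1 - t0} = {t0..t1}" by (simp add: add.commute)
    then have "(x has_vector_derivative f (x (\<tau> + t0)) u0) (at (\<tau> + t0) within (\<lambda>\<tau>. \<tau> + t0) ` {0..t1 - t0})"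
      using x[of "\<tau> + t0"] that by simp
    ultimately show ?thesis using vector_diff_chain_within by (fastforce simp: o_def)
  qed
  then show ?thesis using A1[OF u0, of "t1 - t0" "\<lambda>\<tau>. x (\<tau> + t0)" "t - t0"] x0 t by auto
qed

lemma truncated_field_lipschitz:
  assumes u0: "u0 \<in> {umin..umax}"
  shows "L-lipschitz_on UNIV (\<lambda>y. f (closest_point (cball (\<Xi> u0) R) y) u0)"
proof (rule lipschitz_onI[OF _ L_nonneg])
  let ?B = "cball (\<Xi> u0) R"
  have B: "convex ?B" "closed ?B" "?B \<noteq> {}" using eps0_less_R eps0 by auto
  have PK: "closest_point ?B y \<in> K" for y
    using closest_point_in_set[OF B(2,3), of y] near_equilibrium_in_K[OF u0]
    by (simp add: dist_norm norm_minus_commute)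
  fix y y'
  have "dist (f (closest_point ?B y) u0) (f (closest_point ?B y') u0)
      \<le> L * dist (closest_point ?B y) (closest_point ?B y')"
    using f_lipschitz[OF PK PK, of u0 u0] u0 by (simp add: dist_norm)
  also have "\<dots> \<le> L * dist y y'"
    using closest_point_lipschitz[OF B] L_nonneg by (simp add: mult_left_mono)
  finally show "dist (f (closest_point ?B y) u0) (f (closest_point ?B y') u0) \<le> L * dist y y'" .
qed

text \<open>The solution is obtained for the field truncated outside the ball of radius \<open>R\<close> about
  \<open>\<Xi> u0\<close>, which is globally Lipschitz; by A1 it never leaves that ball, so the truncation is
  inactive.\<close>
lemma frozen_solution:
  assumes u0: "u0 \<in> {umin..umax}" and z0: "norm (z0 - \<Xi> u0) \<le> \<epsilon>0"
  obtains z where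
    "\<And>t. t \<in> {t0..t0+h} \<Longrightarrow> ((\<lambda>s. f (z s) u0) has_integral (z t - z0)) {t0..t}"
    "\<And>t. t \<in> {t0..t0+h} \<Longrightarrow> norm (z t - \<Xi> u0) \<le> m * exp (- lam * (t - t0)) * norm (z0 - \<Xi> u0)"
proof -
  let ?B = "cball (\<Xi> u0) R"
  let ?F = "\<lambda>y. f (closest_point ?B y) u0"
  have F: "L-lipschitz_on UNIV ?F" by (rule truncated_field_lipschitz[OF u0])
  obtain y where y0: "y t0 = z0" and yc: "continuous_on {t0..t0+h} y"
    and yd': "\<And>t. t \<in> {t0..t0+h} \<Longrightarrow> (y has_vector_derivative ?F (y t)) (at t within {t0..t0+h})"
    and Fy: "\<And>t. t \<in> {t0..t0+h} \<Longrightarrow> ((\<lambda>s. ?F (y s)) has_integral (y t - z0)) {t0..t}"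
    using lipschitz_ode_solution[OF F, of t0 "t0 + h" z0] h_pos by auto
  have yd: "(y has_vector_derivative ?F (y t)) (at t within {t0..s})"
    if "t \<in> {t0..s}" "s \<in> {t0..t0+h}" for t s
    using yd'[of t] that by (auto intro: has_vector_derivative_within_subset)
  have inside: "norm (y s - \<Xi> u0) < R" if s: "s \<in> {t0..t0+h}" for s
  proof (rule continuous_stays_below[where \<phi>="\<lambda>s. norm (y s - \<Xi> u0)", OF _ _ _ s])
    show "continuous_on {t0..t0+h} (\<lambda>s. norm (y s - \<Xi> u0))" by (intro continuous_intros yc)
    show "norm (y t0 - \<Xi> u0) < R" using z0 y0 eps0_less_R by simp
    fix s assume s: "s \<in> {t0..t0+h}" and inB: "\<forall>\<sigma>\<in>{t0..s}. norm (y \<sigma> - \<Xi> u0) \<le> R"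
    have "(y has_vector_derivative f (y \<sigma>) u0) (at \<sigma> within {t0..s})" if "\<sigma> \<in> {t0..s}" for \<sigma>
      using yd[OF that s] inB that by (simp add: closest_point_self dist_norm norm_minus_commute)
    then have "norm (y s - \<Xi> u0) \<le> m * exp (- lam * (s - t0)) * norm (z0 - \<Xi> u0)"
      using A1_shifted[OF u0, of t0 s y s] y0 z0 s by auto
    also have "\<dots> \<le> m * 1 * \<epsilon>0" using s lam m1 z0 by (intro mult_mono) auto
    finally show "norm (y s - \<Xi> u0) < R" by simp
  qed
  then have F_eq: "?F (y s) = f (y s) u0" if "s \<in> {t0..t0+h}" for s
    using that by (simp add: closest_point_self dist_norm norm_minus_commute less_imp_le)
  show ?thesis
  proof (rule that)
    fix t assume t: "t \<in> {t0..t0+h}"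
    have "((\<lambda>s. f (y s) u0) has_integral (y t - z0)) {t0..t}
        \<longleftrightarrow> ((\<lambda>s. ?F (y s)) has_integral (y t - z0)) {t0..t}"
      using F_eq t by (intro has_integral_cong) auto
    then show "((\<lambda>s. f (y s) u0) has_integral (y t - z0)) {t0..t}" using Fy[OF t] by simp
    have "(y has_vector_derivative f (y \<sigma>) u0) (at \<sigma> within {t0..t0+h})" if "\<sigma> \<in> {t0..t0+h}" for \<sigma>
      using yd'[OF that] F_eq[OF that] by simp
    then show "norm (y t - \<Xi> u0) \<le> m * exp (- lam * (t - t0)) * norm (z0 - \<Xi> u0)"
      using A1_shifted[OF u0 _ _ t] y0 z0 by auto
  qed
qed

lemma integrator_error_recursion:
  assumes k: "0 < k" "small_gain k" and A: "0 \<le> A" and B: "0 \<le> B"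
    and W: "0 \<le> W" "W \<le> P * B + Q * A"
    and B': "B' \<le> max ((1 - k*\<mu>*h) * B + k\<^sup>2*\<mu>*h\<^sup>2*W + k*h*Lg*(m * A + k * W * D)) (k*h*W)"
  shows "B' \<le> (1 - k*\<mu>*h/2) * B + k * c2 * A"
proof -
  have k1: "k \<le> 1" and kP: "k * (\<mu> * h\<^sup>2 * P + h * Lg * D * P) \<le> \<mu> * h / 2"
    and khP: "k * (h * (P + \<mu> / 2)) \<le> 1"
    using k(2) by (auto simp: small_gain_def)
  note nonneg = constants_nonneg mu h_pos Lg_nonneg m1
  have kW: "k * W \<le> k * (P * B + Q * A)" using W k by (intro mult_left_mono) auto
  have e1: "k\<^sup>2*\<mu>*h\<^sup>2*W \<le> k\<^sup>2*\<mu>*h\<^sup>2*(P * B + Q * A)"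
    using W k mu h_pos by (intro mult_left_mono) auto
  have e2: "k*h*Lg*(k * W * D) \<le> k*h*Lg*(k * (P * B + Q * A) * D)"
    using kW k h_pos Lg_nonneg constants_nonneg(3) by (intro mult_left_mono mult_right_mono) auto
  have e3: "k * (k * (\<mu> * h\<^sup>2 * P + h * Lg * D * P)) * B \<le> k * (\<mu> * h / 2) * B"
    using kP k B by (intro mult_left_mono mult_right_mono) auto
  have e4: "k * k * (\<mu> * h\<^sup>2 * Q + h * Lg * D * Q) * A \<le> k * 1 * (\<mu> * h\<^sup>2 * Q + h * Lg * D * Q) * A"
    using k1 k A nonneg by (intro mult_left_mono mult_right_mono) auto
  have e5: "0 \<le> k * (h * Q) * A" using k h_pos constants_nonneg(5) A by simp
  have "(1 - k*\<mu>*h) * B + k\<^sup>2*\<mu>*h\<^sup>2*W + k*h*Lg*(m * A + k * W * D)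
      \<le> (1 - k*\<mu>*h) * B + k\<^sup>2*\<mu>*h\<^sup>2*(P * B + Q * A) + k*h*Lg*(m * A + k * (P * B + Q * A) * D)"
    using e1 e2 by (simp add: algebra_simps)
  also have "\<dots> = (1 - k*\<mu>*h) * B + k * (k * (\<mu> * h\<^sup>2 * P + h * Lg * D * P)) * B
      + k * k * (\<mu> * h\<^sup>2 * Q + h * Lg * D * Q) * A + k * (h * Lg * m) * A"
    by (simp add: algebra_simps power2_eq_square)
  also have "\<dots> \<le> (1 - k*\<mu>*h) * B + k * (\<mu> * h / 2) * B
      + k * 1 * (\<mu> * h\<^sup>2 * Q + h * Lg * D * Q) * A + k * (h * Lg * m) * A"
    using e3 e4 by linarith
  also have "\<dots> \<le> (1 - k*\<mu>*h/2) * B + k * c2 * A"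
    using e5 by (simp add: c2_def algebra_simps)
  finally have first: "(1 - k*\<mu>*h) * B + k\<^sup>2*\<mu>*h\<^sup>2*W + k*h*Lg*(m * A + k * W * D)
      \<le> (1 - k*\<mu>*h/2) * B + k * c2 * A" .
  have "k*h*W \<le> k*h*(P * B + Q * A)" using W k h_pos by (intro mult_left_mono) auto
  moreover have "(k*h*P) * B \<le> (1 - k*\<mu>*h/2) * B"
    using khP B by (intro mult_right_mono) (auto simp: algebra_simps)
  moreover have "k*(h*Q) * A \<le> k * c2 * A"
    using k A nonneg by (intro mult_left_mono mult_right_mono) (auto simp: c2_def)
  ultimately have "k*h*W \<le> (1 - k*\<mu>*h/2) * B + k * c2 * A" by (simp add: algebra_simps)
  with first have "max ((1 - k*\<mu>*h) * B + k\<^sup>2*\<mu>*h\<^sup>2*W + k*h*Lg*(m * A + k * W * D)) (k*h*W)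
      \<le> (1 - k*\<mu>*h/2) * B + k * c2 * A" by (rule max.boundedI)
  with B' show ?thesis by linarith
qed

text \<open>\<open>\<beta>\<close> is chosen so that the coupling term \<open>k D P B\<close> is absorbed by the gain \<open>k \<mu> h / 4\<close>
  of the integrator error.\<close>
lemma lyapunov_step:
  assumes k: "0 < k" "small_gain k" and A: "0 \<le> A" and B: "0 \<le> B"
    and W: "0 \<le> W" "W \<le> P * B + Q * A"
    and A': "A' \<le> A / 4 + k * W * D"
    and B': "B' \<le> (1 - k*\<mu>*h/2) * B + k * c2 * A"
  shows "A' + \<beta> * B' \<le> (1 - k*\<mu>*h/4) * (A + \<beta> * B)"
proof -
  have kA: "k * (D * Q + \<beta> * c2 + \<mu> * h / 4) \<le> 3/4" using k(2) by (simp add: small_gain_def)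
  note nonneg = constants_nonneg mu h_pos
  have "k * W * D \<le> k * (P * B + Q * A) * D"
    using W(2) k nonneg by (intro mult_right_mono mult_left_mono) auto
  then have "A' \<le> A / 4 + k * (P * B + Q * A) * D" using A' by linarith
  moreover have "\<beta> * B' \<le> \<beta> * ((1 - k*\<mu>*h/2) * B + k * c2 * A)"
    using B' nonneg by (intro mult_left_mono) auto
  ultimately have sum: "A' + \<beta> * B'
      \<le> (1/4 + k * (D * Q + \<beta> * c2)) * A + (k * D * P + \<beta> * (1 - k*\<mu>*h/2)) * B"
    by (simp add: algebra_simps)
  have A_coeff: "(1/4 + k * (D * Q + \<beta> * c2)) * A \<le> (1 - k*\<mu>*h/4) * A"
    using kA A by (intro mult_right_mono) (auto simp: algebra_simps)
  have B_coeff: "(k * D * P + \<beta> * (1 - k*\<mu>*h/2)) * B \<le> (\<beta> * (1 - k*\<mu>*h/4)) * B"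
  proof (rule mult_right_mono[OF _ B])
    have "k * D * P = k * (\<mu> * h) / 4 * (4 * D * P / (\<mu> * h))" using mu h_pos by (simp add: field_simps)
    also have "\<dots> \<le> k * (\<mu> * h) / 4 * \<beta>" unfolding \<beta>_def using k mu h_pos by (intro mult_left_mono) auto
    finally show "k * D * P + \<beta> * (1 - k*\<mu>*h/2) \<le> \<beta> * (1 - k*\<mu>*h/4)" by (simp add: algebra_simps)
  qed
  have "(1 - k*\<mu>*h/4) * (A + \<beta> * B) = (1 - k*\<mu>*h/4) * A + (\<beta> * (1 - k*\<mu>*h/4)) * B"
    by (simp add: algebra_simps)
  then show ?thesis using sum A_coeff B_coeff by linarith
qed

text \<open>Here \<open>W\<close> is the tracking error over a window; it enters its own bound through the
  drift of \<open>u\<^sub>I\<close> and of the plant state during that window.\<close>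
lemma small_gain_absorbs:
  assumes k: "small_gain k" "0 < k" and W: "0 \<le> W"
    and W_le: "W \<le> Lg * LX * (a + k * W * h) + Lg * (m * b + k * W * D)"
  shows "W \<le> P * a + Q * b"
proof -
  have "k * (Lg * LX * h + Lg * D) \<le> 1/2" using k(1) by (simp add: small_gain_def)
  then have "W * (k * (Lg * LX * h + Lg * D)) \<le> W * (1/2)" using W by (intro mult_left_mono) auto
  moreover have "W \<le> Lg * LX * a + Lg * m * b + W * (k * (Lg * LX * h + Lg * D))"
    using W_le by (simp add: algebra_simps)
  ultimately show ?thesis by (simp add: P_def Q_def)
qed

end

lemma plant_estimates_exist:
  fixes f :: "real^'n \<Rightarrow> real \<Rightarrow> real^'n" and g :: "real^'n \<Rightarrow> real" and \<Xi> :: "real \<Rightarrow> real^'n"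
  assumes less: "umin < umax" and f: "C2 (\<lambda>z::(real^'n) \<times> real. f (fst z) (snd z))"
    and g: "locally_lipschitz g" and A1: "assumption_A1 f umin umax \<delta> \<Xi> \<epsilon>0 lam m"
    and mu: "\<mu> > 0"
    and G: "\<forall>a\<in>{umin - \<delta> .. umax + \<delta>}. \<forall>b\<in>{umin - \<delta> .. umax + \<delta>}.
           a < b \<longrightarrow> g (\<Xi> b) - g (\<Xi> a) \<ge> \<mu> * (b - a)"
    and taup: "\<tau>p \<ge> 0"
  obtains c0 L LX Lg Mg where "plant_estimates f g \<Xi> umin umax \<epsilon>0 lam m \<mu> \<tau>p c0 L LX Lg Mg"
proof -
  have \<delta>: "0 < \<delta>" and C1: "C1_on {umin - \<delta>..umax + \<delta>} \<Xi>" and eps0: "0 < \<epsilon>0"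
    and lam: "0 < lam" and m1: "1 \<le> m"
    using A1 unfolding assumption_A1_def by auto
  have U: "{umin..umax} \<subseteq> {umin - \<delta>..umax + \<delta>}" using \<delta> by auto
  obtain LX where LX: "LX-lipschitz_on {umin..umax} \<Xi>"
    using C1_on_lipschitz[OF C1] lipschitz_on_subset[OF _ U] by metis
  define c0 where "c0 = norm (\<Xi> umin) + LX * (umax - umin)"
  have Xi_bound: "norm (\<Xi> u) \<le> c0" if "u \<in> {umin..umax}" for u
  proof -
    have "norm (\<Xi> u) \<le> norm (\<Xi> umin) + LX * norm (u - umin)"
      using lipschitz_on_norm_le[OF LX _ that, of umin] less by auto
    moreover have "LX * norm (u - umin) \<le> LX * (umax - umin)"
      using that lipschitz_on_nonneg[OF LX] by (intro mult_left_mono) auto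
    ultimately show ?thesis unfolding c0_def by linarith
  qed
  define K where "K = cball (0::real^'n) (c0 + m * \<epsilon>0 + 1)"
  have K: "compact K" "convex K" unfolding K_def by simp_all
  obtain L where L: "L-lipschitz_on (K \<times> {umin - 1..umax + 1}) (\<lambda>z. f (fst z) (snd z))"
    by (rule C2_lipschitz_on_compact_convex[OF f compact_Times[OF K(1) compact_Icc]
          convex_Times[OF K(2) convex_real_interval(5)]])
  obtain Lg where Lg: "Lg-lipschitz_on K g" by (rule locally_lipschitz_lipschitz_on_compact[OF g K(1)])
  have "norm (\<Xi> umin) \<le> c0" using Xi_bound less by simp
  then have "0 \<le> c0" using norm_ge_zero order_trans by blast
  moreover have "0 \<le> m * \<epsilon>0" using m1 eps0 by simp
  ultimately have "0 \<in> K" unfolding K_def by simp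
  show ?thesis
  proof (rule that[of c0 L LX Lg "\<bar>g 0\<bar> + Lg * (c0 + m * \<epsilon>0 + 1)"], unfold_locales)
    show "norm (f x u - f x' u') \<le> L * (norm (x - x') + \<bar>u - u'\<bar>)"
      if "x \<in> cball 0 (c0 + m * \<epsilon>0 + 1)" "x' \<in> cball 0 (c0 + m * \<epsilon>0 + 1)"
        "u \<in> {umin - 1..umax + 1}" "u' \<in> {umin - 1..umax + 1}" for x x' u u'
      using lipschitz_on_Times_le[OF L] that by (simp add: K_def)
    show "\<bar>g x - g x'\<bar> \<le> Lg * norm (x - x')"
      if "x \<in> cball 0 (c0 + m * \<epsilon>0 + 1)" "x' \<in> cball 0 (c0 + m * \<epsilon>0 + 1)" for x x'
      using lipschitz_on_normD[OF Lg] that by (simp add: K_def)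
    show "\<bar>g x\<bar> \<le> \<bar>g 0\<bar> + Lg * (c0 + m * \<epsilon>0 + 1)" if "x \<in> cball 0 (c0 + m * \<epsilon>0 + 1)" for x
    proof -
      have "\<bar>g x\<bar> \<le> \<bar>g 0\<bar> + Lg * norm x" using lipschitz_on_norm_le[OF Lg \<open>0 \<in> K\<close>, of x] that
        by (simp add: K_def)
      moreover have "Lg * norm x \<le> Lg * (c0 + m * \<epsilon>0 + 1)"
        using lipschitz_on_nonneg[OF Lg] that by (intro mult_left_mono) auto
      ultimately show ?thesis by linarith
    qed
    show "norm (x t - \<Xi> u0) \<le> m * exp (- lam * t) * norm (x 0 - \<Xi> u0)"
      if "u0 \<in> {umin..umax}" "\<forall>t\<in>{0..T}. (x has_vector_derivative f (x t) u0) (at t within {0..T})"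
        "norm (x 0 - \<Xi> u0) \<le> \<epsilon>0" "t \<in> {0..T}" for u0 T x t
      using A1 that U unfolding assumption_A1_def by blast
    show "\<mu> * (b - a) \<le> g (\<Xi> b) - g (\<Xi> a)" if "a \<in> {umin..umax}" "b \<in> {umin..umax}" "a < b" for a b
      using G that U by blast
  qed (use less eps0 lam m1 mu taup Xi_bound locally_lipschitz_continuous[OF g] lipschitz_on_normD[OF LX]
      lipschitz_on_nonneg[OF L] lipschitz_on_nonneg[OF LX] lipschitz_on_nonneg[OF Lg] in auto)
qed

section \<open>The closed loop\<close>

lemma sat_int_abs_le: "\<bar>sat_int umin umax u w\<bar> \<le> \<bar>w\<bar>"
  by (auto simp: sat_int_def)

lemma sat_int_le: "umin < u \<Longrightarrow> sat_int umin umax u w \<le> w"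
  by (auto simp: sat_int_def)

lemma sat_int_ge: "u < umax \<Longrightarrow> w \<le> sat_int umin umax u w"
  by (auto simp: sat_int_def)

locale closed_loop = plant_estimates +
  fixes k :: real and r :: "real \<Rightarrow> real" and x and uI :: "real \<Rightarrow> real"
  assumes solution: "closed_loop_solution f g umin umax \<tau>p k r x uI"
    and k_pos: "0 < k" and gain: "small_gain k"
    and r_in_Y: "\<And>t. 0 \<le> t \<Longrightarrow> r t \<in> {g (\<Xi> umin)..g (\<Xi> umax)}"
    and uI0: "uI 0 \<in> {umin..umax}" and x0: "norm (x 0 - \<Xi> (uI 0)) \<le> \<epsilon>0"
begin

abbreviation "input t \<equiv> uI t + \<tau>p * k * (r t - g (x t))"

lemma x_integral: "0 \<le> t \<Longrightarrow> ((\<lambda>s. f (x s) (input s)) has_integral (x t - x 0)) {0..t}"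
  using solution by (simp add: closed_loop_solution_def)

lemma uI_integral:
  "0 \<le> t \<Longrightarrow> ((\<lambda>s. sat_int umin umax (uI s) (k * (r s - g (x s)))) has_integral (uI t - uI 0)) {0..t}"
  using solution by (simp add: closed_loop_solution_def)

lemma gain_bounds: "k * W0 * D \<le> 1/2" "k * W0 * D \<le> 3/4 * \<epsilon>0" "k * \<tau>p * W0 \<le> 1"
  using gain by (auto simp: small_gain_def mult.assoc)

lemma uI_in_U:
  assumes t: "0 \<le> t"
  shows "uI t \<in> {umin..umax}"
proof -
  have "uI t \<le> umax"
    by (rule integral_form_stays_below[OF uI_integral _ _ t]) (use uI0 umin_less in \<open>auto simp: sat_int_def\<close>)
  moreover have "((\<lambda>s. - sat_int umin umax (uI s) (k * (r s - g (x s)))) has_integral (- uI t - - uI 0)) {0..t}"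
    if "0 \<le> t" for t
    using has_integral_neg[OF uI_integral[OF that]] by simp
  then have "- uI t \<le> - umin"
    by (rule integral_form_stays_below[OF _ _ _ t]) (use uI0 in \<open>auto simp: sat_int_def\<close>)
  ultimately show ?thesis by simp
qed

lemma uI_lipschitz:
  assumes "0 \<le> a" "a \<le> b" and W: "0 \<le> W" and rW: "\<And>s. s \<in> {a..b} \<Longrightarrow> \<bar>r s - g (x s)\<bar> \<le> W"
  shows "\<bar>uI b - uI a\<bar> \<le> k * W * (b - a)"
proof -
  have "norm (sat_int umin umax (uI s) (k * (r s - g (x s)))) \<le> k * W" if "s \<in> {a..b} - {}" for s
    using sat_int_abs_le[of umin umax "uI s" "k * (r s - g (x s))"] rW[of s] that k_pos
    by (auto simp: abs_mult intro: order_trans)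
  then show ?thesis
    using has_integral_bound_real[OF _ finite.emptyI has_integral_increment[OF uI_integral assms(1,2)]]
      k_pos W assms(2) by simp
qed

lemma input_near_frozen:
  assumes t0: "0 \<le> t0" and W: "0 \<le> W" "W \<le> W0" and \<sigma>: "\<sigma> \<in> {t0..t0+h}"
    and rW: "\<And>s. s \<in> {t0..\<sigma>} \<Longrightarrow> \<bar>r s - g (x s)\<bar> \<le> W"
  shows "\<bar>input \<sigma> - uI t0\<bar> \<le> k * W * (h + \<tau>p)" and "input \<sigma> \<in> {umin - 1..umax + 1}"
proof -
  have "\<bar>uI \<sigma> - uI t0\<bar> \<le> k * W * (\<sigma> - t0)" using uI_lipschitz[OF t0 _ W(1) rW] \<sigma> by auto
  also have "\<dots> \<le> k * W * h" using \<sigma> k_pos W by (intro mult_left_mono) auto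
  finally have uI_near: "\<bar>uI \<sigma> - uI t0\<bar> \<le> k * W * h" .
  have proportional: "\<bar>\<tau>p * k * (r \<sigma> - g (x \<sigma>))\<bar> \<le> \<tau>p * k * W"
    using rW[of \<sigma>] \<sigma> taup k_pos by (simp add: abs_mult mult_left_mono)
  then show "\<bar>input \<sigma> - uI t0\<bar> \<le> k * W * (h + \<tau>p)" using uI_near by (simp add: algebra_simps)
  have "\<tau>p * k * W \<le> \<tau>p * k * W0" using W taup k_pos by (intro mult_left_mono) auto
  then have "\<tau>p * k * W \<le> 1" using gain_bounds(3) by (simp add: mult_ac)
  then show "input \<sigma> \<in> {umin - 1..umax + 1}" using proportional uI_in_U[of \<sigma>] \<sigma> t0 by auto
qed

lemma deviation_from_frozen:
  assumes t0: "0 \<le> t0" and W: "0 \<le> W" "W \<le> W0" and t: "t \<in> {t0..t0+h}"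
    and rW: "\<And>s. s \<in> {t0..t} \<Longrightarrow> \<bar>r s - g (x s)\<bar> \<le> W"
    and xK: "\<And>s. s \<in> {t0..t} \<Longrightarrow> x s \<in> K"
    and z: "\<And>s. s \<in> {t0..t} \<Longrightarrow> ((\<lambda>\<sigma>. f (z \<sigma>) (uI t0)) has_integral (z s - x t0)) {t0..s}"
    and zK: "\<And>s. s \<in> {t0..t} \<Longrightarrow> z s \<in> K"
  shows "norm (x t - z t) \<le> k * W * D1"
proof -
  let ?c = "L * (k * W * (h + \<tau>p))"
  have "norm (x t - z t) \<le> ?c * (t - t0) * exp (L * (t - t0))"
  proof (rule gronwall_deviation[where \<phi>="\<lambda>\<sigma>. f (x \<sigma>) (input \<sigma>) - f (z \<sigma>) (uI t0)"])
    fix s assume s: "s \<in> {t0..t}"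
    have "((\<lambda>\<sigma>. f (x \<sigma>) (input \<sigma>)) has_integral (x s - x t0)) {t0..s}"
      using s t0 by (intro has_integral_increment[OF x_integral]) auto
    from has_integral_diff[OF this z[OF s]]
    show "((\<lambda>\<sigma>. f (x \<sigma>) (input \<sigma>) - f (z \<sigma>) (uI t0)) has_integral (x s - z s)) {t0..s}" by simp
    have sw: "s \<in> {t0..t0+h}" and rW': "\<And>\<sigma>. \<sigma> \<in> {t0..s} \<Longrightarrow> \<bar>r \<sigma> - g (x \<sigma>)\<bar> \<le> W"
      using s t rW by auto
    have "norm (f (x s) (input s) - f (z s) (uI t0)) \<le> L * (norm (x s - z s) + \<bar>input s - uI t0\<bar>)"
      using input_near_frozen(2)[OF t0 W sw rW'] xK[OF s] zK[OF s] uI_in_U[OF t0]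
      by (intro f_lipschitz) auto
    also have "\<dots> \<le> L * (norm (x s - z s) + k * W * (h + \<tau>p))"
      using input_near_frozen(1)[OF t0 W sw rW'] L_nonneg by (intro mult_left_mono) auto
    finally show "norm (f (x s) (input s) - f (z s) (uI t0)) \<le> L * norm (x s - z s) + ?c"
      by (simp add: algebra_simps)
  qed (use L_nonneg k_pos W taup t in auto)
  also have "\<dots> \<le> ?c * h * exp (L * h)"
  proof -
    have th: "t - t0 \<le> h" using t by simp
    have "exp (L * (t - t0)) \<le> exp (L * h)" using mult_left_mono[OF th L_nonneg] by simp
    then show ?thesis using th t L_nonneg k_pos W taup by (intro mult_mono mult_left_mono) auto
  qed
  also have "\<dots> = k * W * D1" by (simp add: D1_def mult_ac)
  finally show ?thesis .
qed

lemma window_stays_near: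
  assumes t0: "0 \<le> t0" and e0: "norm (x t0 - \<Xi> (uI t0)) \<le> \<epsilon>0" and W: "0 \<le> W" "W \<le> W0"
    and rW: "\<And>t. t \<in> {t0..t0+h} \<Longrightarrow> x t \<in> K \<Longrightarrow> \<bar>r t - g (x t)\<bar> \<le> W"
    and z: "\<And>t. t \<in> {t0..t0+h} \<Longrightarrow> ((\<lambda>s. f (z s) (uI t0)) has_integral (z t - x t0)) {t0..t}"
    and z_near: "\<And>t. t \<in> {t0..t0+h} \<Longrightarrow> norm (z t - \<Xi> (uI t0)) \<le> m * \<epsilon>0"
    and t: "t \<in> {t0..t0+h}"
  shows "norm (x t - \<Xi> (uI t0)) < R"
proof (rule continuous_stays_below[where \<phi>="\<lambda>t. norm (x t - \<Xi> (uI t0))", OF _ _ _ t])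
  show "continuous_on {t0..t0+h} (\<lambda>t. norm (x t - \<Xi> (uI t0)))"
    using continuous_on_integral_form[OF x_integral t0] by (intro continuous_intros)
  show "norm (x t0 - \<Xi> (uI t0)) < R" using e0 eps0_less_R by simp
  fix s assume s: "s \<in> {t0..t0+h}" and near: "\<forall>\<sigma>\<in>{t0..s}. norm (x \<sigma> - \<Xi> (uI t0)) \<le> R"
  have xK: "x \<sigma> \<in> K" if "\<sigma> \<in> {t0..s}" for \<sigma>
    using near that near_equilibrium_in_K[OF uI_in_U[OF t0]] by blast
  have zK: "z \<sigma> \<in> K" if "\<sigma> \<in> {t0..s}" for \<sigma>
    using z_near[of \<sigma>] that s near_equilibrium_in_K[OF uI_in_U[OF t0]] by force
  have "norm (x s - z s) \<le> k * W * D1"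
    by (rule deviation_from_frozen[OF t0 W s]) (use rW xK zK z s in auto)
  moreover have "k * W * D1 \<le> k * W0 * D"
    using W k_pos constants_nonneg LX_nonneg h_pos by (intro mult_mono) (auto simp: D_def)
  moreover have "norm (x s - \<Xi> (uI t0)) \<le> norm (z s - \<Xi> (uI t0)) + norm (x s - z s)"
    using norm_triangle_ineq[of "z s - \<Xi> (uI t0)" "x s - z s"] by simp
  ultimately show "norm (x s - \<Xi> (uI t0)) < R" using z_near[OF s] gain_bounds(1) by simp
qed

text \<open>On a window starting within \<open>\<epsilon>0\<close> of the equilibrium, the plant follows the frozen system
  up to \<open>k W D1\<close>, and \<open>\<Xi> (u\<^sub>I t)\<close> moves by at most \<open>k W h LX\<close>.\<close>
lemma window_error_bound:
  assumes t0: "0 \<le> t0" and e0: "norm (x t0 - \<Xi> (uI t0)) \<le> \<epsilon>0" and W: "0 \<le> W" "W \<le> W0"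
    and rW: "\<And>t. t \<in> {t0..t0+h} \<Longrightarrow> x t \<in> K \<Longrightarrow> \<bar>r t - g (x t)\<bar> \<le> W"
    and t: "t \<in> {t0..t0+h}"
  shows "x t \<in> K"
    and "norm (x t - \<Xi> (uI t)) \<le> m * exp (- lam * (t - t0)) * norm (x t0 - \<Xi> (uI t0)) + k * W * D"
proof -
  let ?u0 = "uI t0"
  have u0: "?u0 \<in> {umin..umax}" using uI_in_U[OF t0] .
  obtain z where z: "\<And>t. t \<in> {t0..t0+h} \<Longrightarrow> ((\<lambda>s. f (z s) ?u0) has_integral (z t - x t0)) {t0..t}"
    and z_decay: "\<And>t. t \<in> {t0..t0+h} \<Longrightarrow>
      norm (z t - \<Xi> ?u0) \<le> m * exp (- lam * (t - t0)) * norm (x t0 - \<Xi> ?u0)"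
    using frozen_solution[OF u0 e0] by metis
  have z_near: "norm (z s - \<Xi> ?u0) \<le> m * \<epsilon>0" if "s \<in> {t0..t0+h}" for s
  proof -
    have "m * exp (- lam * (s - t0)) * norm (x t0 - \<Xi> ?u0) \<le> m * 1 * \<epsilon>0"
      using that lam m1 e0 by (intro mult_mono) auto
    then show ?thesis using z_decay[OF that] by simp
  qed
  have xK: "x s \<in> K" if "s \<in> {t0..t0+h}" for s
    using window_stays_near[OF t0 e0 W rW z z_near that] near_equilibrium_in_K[OF u0] by simp
  then show "x t \<in> K" using t .
  have zK: "z s \<in> K" if "s \<in> {t0..t0+h}" for s
    using z_near[OF that] eps0_less_R near_equilibrium_in_K[OF u0] by simp
  have rW': "\<bar>r s - g (x s)\<bar> \<le> W" if "s \<in> {t0..t}" for s using rW xK that t by auto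
  have dev: "norm (x t - z t) \<le> k * W * D1"
    by (rule deviation_from_frozen[OF t0 W t rW']) (use xK zK z t in auto)
  have "\<bar>uI t - ?u0\<bar> \<le> k * W * (t - t0)" using uI_lipschitz[OF t0 _ W(1) rW'] t by auto
  also have "\<dots> \<le> k * W * h" using t k_pos W by (intro mult_left_mono) auto
  finally have "norm (\<Xi> ?u0 - \<Xi> (uI t)) \<le> LX * (k * W * h)"
    using Xi_lipschitz[OF u0 uI_in_U, of t] t t0 LX_nonneg
    by (simp add: abs_minus_commute) (meson mult_left_mono order_trans)
  moreover have "norm (x t - \<Xi> (uI t)) \<le> norm (z t - \<Xi> ?u0) + norm (x t - z t) + norm (\<Xi> ?u0 - \<Xi> (uI t))"
    using norm_triangle_ineq[of "z t - \<Xi> ?u0 + (x t - z t)" "\<Xi> ?u0 - \<Xi> (uI t)"]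
      norm_triangle_ineq[of "z t - \<Xi> ?u0" "x t - z t"] by simp
  ultimately show "norm (x t - \<Xi> (uI t)) \<le> m * exp (- lam * (t - t0)) * norm (x t0 - \<Xi> ?u0) + k * W * D"
    using z_decay[OF t] dev by (simp add: D_def algebra_simps)
qed

lemma window_end_error:
  assumes t0: "0 \<le> t0" and e0: "norm (x t0 - \<Xi> (uI t0)) \<le> \<epsilon>0" and W: "0 \<le> W" "W \<le> W0"
    and rW: "\<And>t. t \<in> {t0..t0+h} \<Longrightarrow> x t \<in> K \<Longrightarrow> \<bar>r t - g (x t)\<bar> \<le> W"
  shows "norm (x (t0 + h) - \<Xi> (uI (t0 + h))) \<le> norm (x t0 - \<Xi> (uI t0)) / 4 + k * W * D"
proof -
  have "m * exp (- lam * (t0 + h - t0)) * norm (x t0 - \<Xi> (uI t0)) = norm (x t0 - \<Xi> (uI t0)) / 4"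
    using decay_over_window by simp
  moreover have "t0 + h \<in> {t0..t0+h}" using h_pos by simp
  ultimately show ?thesis using window_error_bound(2)[OF t0 e0 W rW, of "t0 + h"] by linarith
qed

lemma tracking_error_le_W0: "0 \<le> t \<Longrightarrow> x t \<in> K \<Longrightarrow> \<bar>r t - g (x t)\<bar> \<le> W0"
  using r_in_Y[of t] g_bound[of "x t"] by (auto simp: W0_def abs_le_iff)

lemma error_at_window_start: "norm (x (real n * h) - \<Xi> (uI (real n * h))) \<le> \<epsilon>0"
proof (induction n)
  case 0
  then show ?case using x0 by simp
next
  case (Suc n)
  have t0: "0 \<le> real n * h" using h_pos by simp
  have "\<And>t. t \<in> {real n * h..real n * h + h} \<Longrightarrow> x t \<in> K \<Longrightarrow> \<bar>r t - g (x t)\<bar> \<le> W0"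
    using tracking_error_le_W0 t0 by (meson atLeastAtMost_iff order_trans)
  from window_end_error[OF t0 Suc.IH constants_nonneg(1) order_refl this]
  have "norm (x (real n * h + h) - \<Xi> (uI (real n * h + h))) \<le> \<epsilon>0 / 4 + k * W0 * D"
    using Suc.IH by simp
  then show ?case using gain_bounds(2) by (simp add: algebra_simps)
qed

lemma x_in_K:
  assumes "0 \<le> t"
  shows "x t \<in> K"
proof -
  obtain n :: nat where n: "real n * h \<le> t" "t \<le> real n * h + h" using exists_window assms h_pos by blast
  have t0: "0 \<le> real n * h" using h_pos by simp
  have "\<And>t. t \<in> {real n * h..real n * h + h} \<Longrightarrow> x t \<in> K \<Longrightarrow> \<bar>r t - g (x t)\<bar> \<le> W0"
    using tracking_error_le_W0 t0 by (meson atLeastAtMost_iff order_trans)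
  from window_error_bound(1)[OF t0 error_at_window_start constants_nonneg(1) order_refl this] n
  show ?thesis by simp
qed

lemma output_near_G:
  assumes t: "0 \<le> t" and b: "norm (x t - \<Xi> (uI t)) \<le> b"
  shows "\<bar>g (\<Xi> (uI t)) - g (x t)\<bar> \<le> Lg * b"
proof -
  have "\<bar>g (\<Xi> (uI t)) - g (x t)\<bar> \<le> Lg * norm (\<Xi> (uI t) - x t)"
    by (rule g_lipschitz[OF Xi_in_K[OF uI_in_U[OF t]] x_in_K[OF t]])
  also have "\<dots> \<le> Lg * b" using b Lg_nonneg by (simp add: mult_left_mono norm_minus_commute)
  finally show ?thesis .
qed

end

section \<open>Convergence after the reference settles\<close>

locale settling_loop = closed_loop +
  fixes rf ur T0 :: real
  assumes r_settled: "\<And>t. T0 \<le> t \<Longrightarrow> r t = rf"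
    and ur_in_U: "ur \<in> {umin..umax}" and G_ur: "g (\<Xi> ur) = rf"
begin

lemma output_error_le:
  assumes t: "0 \<le> t" and a: "\<bar>uI t - ur\<bar> \<le> a" and b: "norm (x t - \<Xi> (uI t)) \<le> b"
  shows "\<bar>rf - g (x t)\<bar> \<le> Lg * LX * a + Lg * b"
proof -
  have "\<bar>g (\<Xi> ur) - g (\<Xi> (uI t))\<bar> \<le> Lg * norm (\<Xi> ur - \<Xi> (uI t))"
    by (rule g_lipschitz[OF Xi_in_K[OF ur_in_U] Xi_in_K[OF uI_in_U[OF t]]])
  also have "\<dots> \<le> Lg * (LX * \<bar>uI t - ur\<bar>)"
    using Xi_lipschitz[OF ur_in_U uI_in_U[OF t]] Lg_nonneg by (simp add: abs_minus_commute mult_left_mono)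
  also have "\<dots> \<le> Lg * LX * a" using a Lg_nonneg LX_nonneg by (simp add: mult_left_mono mult.assoc)
  finally show ?thesis using output_near_G[OF t b] G_ur by linarith
qed

lemma integrator_moves_slowly:
  assumes t0: "0 \<le> t0" "T0 \<le> t0" and W: "0 \<le> W" "\<And>t. t \<in> {t0..t0+h} \<Longrightarrow> \<bar>rf - g (x t)\<bar> \<le> W"
    and ab: "a \<in> {t0..t0+h}" "b \<in> {t0..t0+h}" "a \<le> b"
  shows "\<bar>uI b - uI a\<bar> \<le> k * W * h"
proof -
  have "\<bar>uI b - uI a\<bar> \<le> k * W * (b - a)"
    using uI_lipschitz[of a b W] W r_settled t0 ab by auto
  also have "\<dots> \<le> k * W * h" using ab k_pos W by (intro mult_left_mono) auto
  finally show ?thesis .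
qed

lemma integrator_step_above:
  assumes t0: "0 \<le> t0" "T0 \<le> t0"
    and W: "0 \<le> W" "\<And>t. t \<in> {t0..t0+h} \<Longrightarrow> \<bar>rf - g (x t)\<bar> \<le> W"
    and E: "\<And>t. t \<in> {t0..t0+h} \<Longrightarrow> norm (x t - \<Xi> (uI t)) \<le> E"
    and above: "\<And>s. s \<in> {t0..t0+h} \<Longrightarrow> ur < uI s"
  shows "uI (t0+h) - ur \<le> (1 - k*\<mu>*h) * (uI t0 - ur) + k\<^sup>2*\<mu>*h\<^sup>2*W + k*h*Lg*E"
proof -
  define C where "C = k * (- \<mu> * ((uI t0 - ur) - k * W * h) + Lg * E)"
  have "sat_int umin umax (uI s) (k * (r s - g (x s))) \<le> C" if s: "s \<in> {t0..t0+h}" for s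
  proof -
    have s0: "0 \<le> s" and rs: "r s = rf" using s t0 r_settled by auto
    have "\<bar>uI s - uI t0\<bar> \<le> k * W * h" using integrator_moves_slowly[OF t0 W, of t0 s] s by auto
    then have "\<mu> * (uI t0 - uI s) \<le> \<mu> * (k * W * h)" using mu by (intro mult_left_mono) auto
    moreover have "\<mu> * (uI s - ur) \<le> g (\<Xi> (uI s)) - g (\<Xi> ur)"
      using G_increasing[OF ur_in_U uI_in_U[OF s0] above[OF s]] .
    moreover have "\<bar>g (\<Xi> (uI s)) - g (x s)\<bar> \<le> Lg * E"
      using output_near_G[OF s0 E[OF s]] .
    ultimately have "r s - g (x s) \<le> - \<mu> * ((uI t0 - ur) - k * W * h) + Lg * E"
      using rs G_ur by (simp add: algebra_simps abs_le_iff)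
    then have "k * (r s - g (x s)) \<le> C" unfolding C_def using k_pos by (simp add: mult_left_mono)
    moreover have "umin < uI s" using above[OF s] ur_in_U by auto
    ultimately show ?thesis using sat_int_le by (meson order_trans)
  qed
  then have "uI (t0+h) - uI t0 \<le> h * C"
    using has_integral_le[OF has_integral_increment[OF uI_integral t0(1)] has_integral_const_real[of C t0 "t0+h"]]
      h_pos by simp
  then show ?thesis by (simp add: C_def power2_eq_square algebra_simps)
qed

lemma integrator_step_below:
  assumes t0: "0 \<le> t0" "T0 \<le> t0"
    and W: "0 \<le> W" "\<And>t. t \<in> {t0..t0+h} \<Longrightarrow> \<bar>rf - g (x t)\<bar> \<le> W"
    and E: "\<And>t. t \<in> {t0..t0+h} \<Longrightarrow> norm (x t - \<Xi> (uI t)) \<le> E"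
    and below: "\<And>s. s \<in> {t0..t0+h} \<Longrightarrow> uI s < ur"
  shows "ur - uI (t0+h) \<le> (1 - k*\<mu>*h) * (ur - uI t0) + k\<^sup>2*\<mu>*h\<^sup>2*W + k*h*Lg*E"
proof -
  define C where "C = k * (\<mu> * ((ur - uI t0) - k * W * h) - Lg * E)"
  have "C \<le> sat_int umin umax (uI s) (k * (r s - g (x s)))" if s: "s \<in> {t0..t0+h}" for s
  proof -
    have s0: "0 \<le> s" and rs: "r s = rf" using s t0 r_settled by auto
    have "\<bar>uI s - uI t0\<bar> \<le> k * W * h" using integrator_moves_slowly[OF t0 W, of t0 s] s by auto
    then have "\<mu> * (uI s - uI t0) \<le> \<mu> * (k * W * h)" using mu by (intro mult_left_mono) auto
    moreover have "\<mu> * (ur - uI s) \<le> g (\<Xi> ur) - g (\<Xi> (uI s))"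
      using G_increasing[OF uI_in_U[OF s0] ur_in_U below[OF s]] .
    moreover have "\<bar>g (\<Xi> (uI s)) - g (x s)\<bar> \<le> Lg * E"
      using output_near_G[OF s0 E[OF s]] .
    ultimately have "\<mu> * ((ur - uI t0) - k * W * h) - Lg * E \<le> r s - g (x s)"
      using rs G_ur by (simp add: algebra_simps abs_le_iff)
    then have "C \<le> k * (r s - g (x s))" unfolding C_def using k_pos by (simp add: mult_left_mono)
    moreover have "uI s < umax" using below[OF s] ur_in_U by auto
    ultimately show ?thesis using sat_int_ge by (meson order_trans)
  qed
  then have "h * C \<le> uI (t0+h) - uI t0"
    using has_integral_le[OF has_integral_const_real[of C t0 "t0+h"] has_integral_increment[OF uI_integral t0(1)]]
      h_pos by simp
  then show ?thesis by (simp add: C_def power2_eq_square algebra_simps)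
qed

lemma integrator_step:
  assumes t0: "0 \<le> t0" "T0 \<le> t0"
    and W: "0 \<le> W" "\<And>t. t \<in> {t0..t0+h} \<Longrightarrow> \<bar>rf - g (x t)\<bar> \<le> W"
    and E: "\<And>t. t \<in> {t0..t0+h} \<Longrightarrow> norm (x t - \<Xi> (uI t)) \<le> E"
  shows "\<bar>uI (t0+h) - ur\<bar> \<le> max ((1 - k*\<mu>*h) * \<bar>uI t0 - ur\<bar> + k\<^sup>2*\<mu>*h\<^sup>2*W + k*h*Lg*E) (k*h*W)"
proof (cases "\<exists>s\<in>{t0..t0+h}. uI s = ur")
  case True
  then obtain s where "s \<in> {t0..t0+h}" "uI s = ur" by blast
  then have "\<bar>uI (t0+h) - ur\<bar> \<le> k * W * h" using integrator_moves_slowly[OF t0 W, of s "t0+h"] h_pos by auto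
  then show ?thesis by (simp add: mult_ac)
next
  case False
  moreover have "continuous_on {t0..t0+h} uI" by (rule continuous_on_integral_form[OF uI_integral t0(1)])
  ultimately have "(\<forall>s\<in>{t0..t0+h}. ur < uI s) \<or> (\<forall>s\<in>{t0..t0+h}. uI s < ur)"
    using continuous_avoiding_value[of t0 "t0+h" uI ur] by blast
  then show ?thesis
  proof
    assume above: "\<forall>s\<in>{t0..t0+h}. ur < uI s"
    then have "ur < uI t0" "ur < uI (t0+h)" using h_pos by auto
    then show ?thesis using integrator_step_above[OF t0 W E] above by auto
  next
    assume below: "\<forall>s\<in>{t0..t0+h}. uI s < ur"
    then have "uI t0 < ur" "uI (t0+h) < ur" using h_pos by auto
    then show ?thesis using integrator_step_below[OF t0 W E] below by auto
  qed
qed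

definition "n0 = nat \<lceil>max T0 0 / h\<rceil>"

lemma settled_after_n0: "n0 \<le> n \<Longrightarrow> T0 \<le> real n * h"
proof -
  assume n: "n0 \<le> n"
  have "max T0 0 / h \<le> real n0" unfolding n0_def by (rule real_nat_ceiling_ge)
  also have "\<dots> \<le> real n" using n by simp
  finally show ?thesis using h_pos by (simp add: pos_divide_le_eq)
qed

abbreviation "err_x n \<equiv> norm (x (real n * h) - \<Xi> (uI (real n * h)))"
abbreviation "err_u n \<equiv> \<bar>uI (real n * h) - ur\<bar>"

lemma settled_window:
  assumes n: "n0 \<le> n"
  obtains W where "0 \<le> W" "W \<le> P * err_u n + Q * err_x n"
    and "\<And>t. t \<in> {real n * h..real n * h + h} \<Longrightarrow> norm (x t - \<Xi> (uI t)) \<le> m * err_x n + k * W * D"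
    and "\<And>t. t \<in> {real n * h..real n * h + h} \<Longrightarrow> \<bar>uI t - ur\<bar> \<le> err_u n + k * W * h"
    and "\<And>t. t \<in> {real n * h..real n * h + h} \<Longrightarrow> \<bar>rf - g (x t)\<bar> \<le> W"
    and "err_x (Suc n) \<le> err_x n / 4 + k * W * D"
    and "err_u (Suc n)
      \<le> max ((1 - k*\<mu>*h) * err_u n + k\<^sup>2*\<mu>*h\<^sup>2*W + k*h*Lg*(m * err_x n + k * W * D)) (k*h*W)"
proof -
  define t0 where "t0 = real n * h"
  have t0: "0 \<le> t0" "T0 \<le> t0" using h_pos settled_after_n0[OF n] by (auto simp: t0_def)
  have r_rf: "r t = rf" if "t \<in> {t0..t0+h}" for t using r_settled t0 that by auto
  have "continuous_on {t0..t0+h} (\<lambda>t. g (x t))"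
    by (rule continuous_on_compose2[OF g_continuous continuous_on_integral_form[OF x_integral t0(1)]]) auto
  then have "continuous_on {t0..t0+h} (\<lambda>t. \<bar>rf - g (x t)\<bar>)" by (intro continuous_intros)
  moreover have "{t0..t0+h} \<noteq> {}" using h_pos by simp
  ultimately obtain ts where ts: "ts \<in> {t0..t0+h}"
    and ts_max: "\<And>t. t \<in> {t0..t0+h} \<Longrightarrow> \<bar>rf - g (x t)\<bar> \<le> \<bar>rf - g (x ts)\<bar>"
    using continuous_attains_sup[OF compact_Icc] by blast
  define W where "W = \<bar>rf - g (x ts)\<bar>"
  have W: "0 \<le> W" "\<And>t. t \<in> {t0..t0+h} \<Longrightarrow> \<bar>rf - g (x t)\<bar> \<le> W" using ts_max by (auto simp: W_def)
  have W_W0: "W \<le> W0" using tracking_error_le_W0[of ts] x_in_K[of ts] ts t0 r_rf[OF ts] by (auto simp: W_def)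
  have rW: "\<And>t. t \<in> {t0..t0+h} \<Longrightarrow> x t \<in> K \<Longrightarrow> \<bar>r t - g (x t)\<bar> \<le> W" using W(2) r_rf by auto
  have e0: "norm (x t0 - \<Xi> (uI t0)) \<le> \<epsilon>0" using error_at_window_start by (simp add: t0_def)
  have E: "norm (x t - \<Xi> (uI t)) \<le> m * err_x n + k * W * D" if t: "t \<in> {t0..t0+h}" for t
  proof -
    have "m * exp (- lam * (t - t0)) * err_x n \<le> m * 1 * err_x n" using t lam m1 by (intro mult_mono) auto
    then show ?thesis using window_error_bound(2)[OF t0(1) e0 W(1) W_W0 rW t] by (simp add: t0_def)
  qed
  have U: "\<bar>uI t - ur\<bar> \<le> err_u n + k * W * h" if t: "t \<in> {t0..t0+h}" for t
    using integrator_moves_slowly[OF t0 W, of t0 t] t by (auto simp: t0_def)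
  have "W \<le> Lg * LX * (err_u n + k * W * h) + Lg * (m * err_x n + k * W * D)"
    using output_error_le[OF _ U[OF ts] E[OF ts]] ts t0 by (simp add: W_def)
  then have "W \<le> P * err_u n + Q * err_x n" by (rule small_gain_absorbs[OF gain k_pos W(1)])
  moreover have "real (Suc n) * h = t0 + h" by (simp add: t0_def algebra_simps)
  moreover note window_end_error[OF t0(1) e0 W(1) W_W0 rW] integrator_step[OF t0 W E]
  ultimately show ?thesis using that W(1) E U W(2) by (simp add: t0_def)
qed

definition "\<rho> = 1 - k * \<mu> * h / 4"

lemma rho_bounds: "0 < \<rho>" "\<rho> < 1"
proof -
  have "k * (h * (\<mu> / 2)) \<le> k * (h * (P + \<mu> / 2))"
    using k_pos h_pos constants_nonneg(4) by (intro mult_left_mono) auto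
  also have "\<dots> \<le> 1" using gain by (simp add: small_gain_def)
  finally show "0 < \<rho>" by (simp add: \<rho>_def algebra_simps)
  show "\<rho> < 1" using k_pos mu h_pos by (simp add: \<rho>_def)
qed

lemma lyapunov_decrease:
  assumes "n0 \<le> n"
  shows "err_x (Suc n) + \<beta> * err_u (Suc n) \<le> \<rho> * (err_x n + \<beta> * err_u n)"
proof -
  obtain W where W: "0 \<le> W" "W \<le> P * err_u n + Q * err_x n"
    and x: "err_x (Suc n) \<le> err_x n / 4 + k * W * D"
    and u: "err_u (Suc n)
      \<le> max ((1 - k*\<mu>*h) * err_u n + k\<^sup>2*\<mu>*h\<^sup>2*W + k*h*Lg*(m * err_x n + k * W * D)) (k*h*W)"
    using settled_window[OF assms] by metis
  from integrator_error_recursion[OF k_pos gain norm_ge_zero abs_ge_zero W u]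
  have "err_u (Suc n) \<le> (1 - k*\<mu>*h/2) * err_u n + k * c2 * err_x n" .
  from lyapunov_step[OF k_pos gain norm_ge_zero abs_ge_zero W x this]
  show ?thesis by (simp add: \<rho>_def)
qed

lemma lyapunov_decay: "n0 \<le> n \<Longrightarrow> err_x n + \<beta> * err_u n \<le> \<rho> ^ (n - n0) * (err_x n0 + \<beta> * err_u n0)"
proof (induction n rule: dec_induct)
  case (step n)
  have "err_x (Suc n) + \<beta> * err_u (Suc n) \<le> \<rho> * (err_x n + \<beta> * err_u n)"
    by (rule lyapunov_decrease[OF step(1)])
  also have "\<dots> \<le> \<rho> * (\<rho> ^ (n - n0) * (err_x n0 + \<beta> * err_u n0))"
    using step(3) rho_bounds by (intro mult_left_mono) auto
  also have "\<dots> = \<rho> ^ (Suc n - n0) * (err_x n0 + \<beta> * err_u n0)"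
    using step(1) by (simp add: Suc_diff_le)
  finally show ?case .
qed simp

abbreviation "deviation t \<equiv> max (norm (x t - \<Xi> ur)) (max \<bar>input t - ur\<bar> \<bar>g (x t) - rf\<bar>)"

definition "Z = m + k * D * (P + Q) + LX * (1 + k * h * (P + Q)) + (1 + k * h * (P + Q) + \<tau>p * k * (P + Q))
  + (P + Q)"

lemma settled_window_errors:
  assumes n: "n0 \<le> n" and t: "t \<in> {real n * h..real n * h + h}"
  shows "norm (x t - \<Xi> (uI t)) \<le> (m + k * D * (P + Q)) * (err_x n + \<beta> * err_u n)"
    and "\<bar>uI t - ur\<bar> \<le> (1 + k * h * (P + Q)) * (err_x n + \<beta> * err_u n)"
    and "\<bar>rf - g (x t)\<bar> \<le> (P + Q) * (err_x n + \<beta> * err_u n)"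
proof -
  let ?N = "err_x n + \<beta> * err_u n" and ?S = "P + Q"
  obtain W where W: "0 \<le> W" "W \<le> P * err_u n + Q * err_x n"
    and E: "norm (x t - \<Xi> (uI t)) \<le> m * err_x n + k * W * D"
    and U: "\<bar>uI t - ur\<bar> \<le> err_u n + k * W * h"
    and Y: "\<bar>rf - g (x t)\<bar> \<le> W"
    using settled_window[OF n] t by metis
  note nonneg = constants_nonneg k_pos h_pos
  have "err_u n \<le> \<beta> * err_u n" "0 \<le> \<beta> * err_u n"
    using nonneg mult_right_mono[of 1 \<beta> "err_u n"] by simp_all
  then have errs: "err_x n \<le> ?N" "err_u n \<le> ?N"
    using norm_ge_zero[of "x (real n * h) - \<Xi> (uI (real n * h))"] by linarith+
  have "Q * err_x n \<le> Q * ?N" "P * err_u n \<le> P * ?N"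
    using errs nonneg by (simp_all add: mult_left_mono)
  then have WN: "W \<le> ?S * ?N" using W(2) unfolding distrib_right by linarith
  then show "\<bar>rf - g (x t)\<bar> \<le> ?S * ?N" using Y by linarith
  have kW: "k * W \<le> k * (?S * ?N)" using WN k_pos by simp
  have "norm (x t - \<Xi> (uI t)) \<le> m * ?N + k * (?S * ?N) * D"
    using E mult_left_mono[OF errs(1), of m] mult_right_mono[OF kW, of D] nonneg m1 by linarith
  then show "norm (x t - \<Xi> (uI t)) \<le> (m + k * D * ?S) * ?N" by (simp add: algebra_simps)
  have "\<bar>uI t - ur\<bar> \<le> ?N + k * (?S * ?N) * h"
    using U errs(2) mult_right_mono[OF kW, of h] nonneg by linarith
  then show "\<bar>uI t - ur\<bar> \<le> (1 + k * h * ?S) * ?N" by (simp add: algebra_simps)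
qed

lemma deviation_on_settled_window:
  assumes n: "n0 \<le> n" and t: "t \<in> {real n * h..real n * h + h}"
  shows "deviation t \<le> Z * (err_x n + \<beta> * err_u n)"
proof -
  let ?N = "err_x n + \<beta> * err_u n" and ?S = "P + Q"
  note errors = settled_window_errors[OF n t] and nonneg = constants_nonneg k_pos h_pos LX_nonneg taup
  have "0 \<le> real n * h" "real n * h \<le> t" using h_pos t by auto
  then have t0: "0 \<le> t" by linarith
  have "norm (\<Xi> (uI t) - \<Xi> ur) \<le> LX * ((1 + k * h * ?S) * ?N)"
    using Xi_lipschitz[OF uI_in_U[OF t0] ur_in_U] mult_left_mono[OF errors(2) LX_nonneg] by linarith
  then have "norm (x t - \<Xi> ur) \<le> (m + k * D * ?S) * ?N + LX * ((1 + k * h * ?S) * ?N)"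
    using errors(1) norm_triangle_ineq[of "x t - \<Xi> (uI t)" "\<Xi> (uI t) - \<Xi> ur"] by simp
  then have dx: "norm (x t - \<Xi> ur) \<le> (m + k * D * ?S + LX * (1 + k * h * ?S)) * ?N"
    by (simp add: algebra_simps)
  have "\<bar>\<tau>p * k * (r t - g (x t))\<bar> \<le> \<tau>p * k * (?S * ?N)"
    using errors(3) r_settled settled_after_n0[OF n] t nonneg by (simp add: abs_mult mult_left_mono)
  then have "\<bar>input t - ur\<bar> \<le> (1 + k * h * ?S) * ?N + \<tau>p * k * (?S * ?N)"
    using errors(2) by arith
  then have du: "\<bar>input t - ur\<bar> \<le> (1 + k * h * ?S + \<tau>p * k * ?S) * ?N"
    by (simp add: algebra_simps)
  have dy: "\<bar>g (x t) - rf\<bar> \<le> ?S * ?N" using errors(3) by linarith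
  have "0 \<le> k * D * ?S" "0 \<le> LX * (1 + k * h * ?S)" "0 \<le> k * h * ?S" "0 \<le> \<tau>p * k * ?S"
    using nonneg by auto
  then have "m + k * D * ?S + LX * (1 + k * h * ?S) \<le> Z" "1 + k * h * ?S + \<tau>p * k * ?S \<le> Z" "?S \<le> Z"
    unfolding Z_def using m1 nonneg by linarith+
  moreover have "0 \<le> ?N" using nonneg by simp
  ultimately have "(m + k * D * ?S + LX * (1 + k * h * ?S)) * ?N \<le> Z * ?N"
    "(1 + k * h * ?S + \<tau>p * k * ?S) * ?N \<le> Z * ?N" "?S * ?N \<le> Z * ?N"
    by (simp_all add: mult_right_mono)
  then show ?thesis using dx du dy by (simp add: max.bounded_iff)
qed

lemma deviation_bounded:
  assumes t: "0 \<le> t"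
  shows "deviation t \<le> (2 * c0 + R) + (umax - umin + 1) + 2 * Mg"
proof -
  have xK: "x t \<in> K" by (rule x_in_K[OF t])
  have "norm (x t - \<Xi> ur) \<le> norm (x t) + norm (\<Xi> ur)" by (rule norm_triangle_ineq4)
  also have "\<dots> \<le> (c0 + R) + c0" using xK Xi_bound[OF ur_in_U] by (intro add_mono) auto
  finally have dx: "norm (x t - \<Xi> ur) \<le> 2 * c0 + R" by simp
  have "\<bar>\<tau>p * k * (r t - g (x t))\<bar> \<le> \<tau>p * k * W0"
    using tracking_error_le_W0[OF t xK] taup k_pos by (simp add: abs_mult mult_left_mono)
  also have "\<dots> \<le> 1" using gain_bounds(3) by (simp add: mult_ac)
  finally have "\<bar>input t - ur\<bar> \<le> umax - umin + 1" using uI_in_U[OF t] ur_in_U by auto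
  moreover have "\<bar>g (x t) - rf\<bar> \<le> 2 * Mg"
    using g_bound[OF xK] g_bound[OF Xi_in_K[OF ur_in_U]] G_ur by linarith
  moreover have "0 \<le> 2 * c0 + R" "0 \<le> umax - umin + 1" "0 \<le> 2 * Mg"
    using c0_nonneg eps0 m1 umin_less g_bound[OF xK] by (auto intro: add_nonneg_nonneg)
  ultimately show ?thesis using dx by linarith
qed

lemma exponential_convergence:
  "\<exists>C \<alpha>. \<alpha> > 0 \<and> (\<forall>t\<ge>0.
      norm (x t - \<Xi> ur) \<le> C * exp (- \<alpha> * t)
    \<and> \<bar>uI t + \<tau>p * k * (r t - g (x t)) - ur\<bar> \<le> C * exp (- \<alpha> * t)
    \<and> \<bar>g (x t) - rf\<bar> \<le> C * exp (- \<alpha> * t))"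
proof -
  have Z: "0 \<le> Z" unfolding Z_def using constants_nonneg k_pos h_pos LX_nonneg taup m1 by simp
  have "deviation t \<le> (Z * (err_x n0 + \<beta> * err_u n0)) * \<rho> ^ (n - n0)"
    if "n0 \<le> n" "real n * h \<le> t" "t \<le> real n * h + h" for n t
  proof -
    have "deviation t \<le> Z * (err_x n + \<beta> * err_u n)"
      using deviation_on_settled_window that by auto
    also have "\<dots> \<le> Z * (\<rho> ^ (n - n0) * (err_x n0 + \<beta> * err_u n0))"
      using lyapunov_decay[OF that(1)] Z by (rule mult_left_mono)
    finally show ?thesis by (simp add: mult_ac)
  qed
  from exponential_A1_shifted_windows[OF h_pos rho_bounds deviation_bounded this]
  show ?thesis by auto
qed

end

theorem proposition2:
  fixes f :: "real^'n \<Rightarrow> real \<Rightarrow> real^'n" and g :: "real^'n \<Rightarrow> real"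
    and \<Xi> :: "real \<Rightarrow> real^'n"
    and umin umax \<delta> \<epsilon>0 lam m \<mu> \<tau>p :: real
  assumes "umin < umax"
    and "C2 (\<lambda>z::(real^'n) \<times> real. f (fst z) (snd z))"
    and "locally_lipschitz g"
    and "assumption_A1 f umin umax \<delta> \<Xi> \<epsilon>0 lam m"
    and "\<mu> > 0"
    and "\<forall>a\<in>{umin - \<delta> .. umax + \<delta>}. \<forall>b\<in>{umin - \<delta> .. umax + \<delta>}.
           a < b \<longrightarrow> g (\<Xi> b) - g (\<Xi> a) \<ge> \<mu> * (b - a)"
    and "\<tau>p \<ge> 0"
  shows "\<exists>\<kappa>>0. \<forall>k. 0 < k \<and> k < \<kappa> \<longrightarrow> (\<exists>Tb>0. \<forall>r J rf ur x uI.
           finite J \<and> J \<subseteq> {0<..} \<and> (\<forall>t1\<in>J. \<forall>t2\<in>J. t1 \<noteq> t2 \<longrightarrow> \<bar>t1 - t2\<bar> \<ge> Tb)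
           \<and> (\<forall>t\<ge>0. r t \<in> {g (\<Xi> umin) .. g (\<Xi> umax)})
           \<and> (\<forall>t\<in>{0..} - J. \<exists>e>0. \<forall>s\<ge>0. \<bar>s - t\<bar> < e \<longrightarrow> r s = r t)
           \<and> (\<exists>T0. \<forall>t\<ge>T0. r t = rf)
           \<and> ur \<in> {umin..umax} \<and> g (\<Xi> ur) = rf
           \<and> uI 0 \<in> {umin..umax} \<and> norm (x 0 - \<Xi> (uI 0)) \<le> \<epsilon>0
           \<and> closed_loop_solution f g umin umax \<tau>p k r x uI
           \<longrightarrow> (\<exists>C \<alpha>. \<alpha> > 0 \<and> (\<forall>t\<ge>0.
                  norm (x t - \<Xi> ur) \<le> C * exp (- \<alpha> * t)
                \<and> \<bar>uI t + \<tau>p * k * (r t - g (x t)) - ur\<bar> \<le> C * exp (- \<alpha> * t)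
                \<and> \<bar>g (x t) - rf\<bar> \<le> C * exp (- \<alpha> * t))))"
proof -
  obtain c0 L LX Lg Mg where pe: "plant_estimates f g \<Xi> umin umax \<epsilon>0 lam m \<mu> \<tau>p c0 L LX Lg Mg"
    using plant_estimates_exist[OF assms] .
  interpret plant_estimates f g \<Xi> umin umax \<epsilon>0 lam m \<mu> \<tau>p c0 L LX Lg Mg by (rule pe)
  obtain \<kappa> where \<kappa>: "\<kappa> > 0" "\<And>k. 0 < k \<Longrightarrow> k < \<kappa> \<Longrightarrow> small_gain k"
    using eventually_small_gain unfolding eventually_at_right_field by auto
  have converges: "\<exists>C \<alpha>. \<alpha> > 0 \<and> (\<forall>t\<ge>0. norm (x t - \<Xi> ur) \<le> C * exp (- \<alpha> * t)
      \<and> \<bar>uI t + \<tau>p * k * (r t - g (x t)) - ur\<bar> \<le> C * exp (- \<alpha> * t) \<and> \<bar>g (x t) - rf\<bar> \<le> C * exp (- \<alpha> * t))"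
    if "0 < k" "k < \<kappa>" "closed_loop_solution f g umin umax \<tau>p k r x uI"
      "\<forall>t\<ge>0. r t \<in> {g (\<Xi> umin) .. g (\<Xi> umax)}" "\<forall>t\<ge>T0. r t = rf" "ur \<in> {umin..umax}" "g (\<Xi> ur) = rf"
      "uI 0 \<in> {umin..umax}" "norm (x 0 - \<Xi> (uI 0)) \<le> \<epsilon>0"
    for k r x uI T0 rf ur
  proof -
    interpret settling_loop f g \<Xi> umin umax \<epsilon>0 lam m \<mu> \<tau>p c0 L LX Lg Mg k r x uI rf ur T0
      by (intro settling_loop.intro closed_loop.intro pe closed_loop_axioms.intro settling_loop_axioms.intro)
        (use that \<kappa>(2) in auto)
    show ?thesis by (rule exponential_convergence)
  qed
  text \<open>Any dwell time will do: the small-gain argument keeps the plant near its equilibrium for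
    every reference with values in \<open>Y\<close>, and only the final value of the reference matters.\<close>
  show ?thesis
    by (rule exI[of _ \<kappa>], intro conjI allI impI \<kappa>(1), rule exI[of _ "1::real"],
        intro conjI zero_less_one allI impI, elim conjE exE, rule converges) assumption+
qed

end
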